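(* Let $\{G_\theta:\theta>0\}$ be one of the parametric families listed below, indexed by the indicated parameter $\theta$ (all other parameters held fixed at arbitrary admissible values), let $G=G_1$, let $\theta>1$, and let $\ell$ denote the logarithmic loss. Then: (a) If the family is the normal scale family, exponential scale family, Laplace scale family, Weibull scale family, gamma scale family, generalized gamma scale family, or the log-normal log-scale family, then $\ell(G_\theta,G)<\ell(G_{1/\theta},G)$. (b) If the family is the inverse gamma scale family, then $\ell(G_\theta,G)>\ell(G_{1/\theta},G)$. (c) If the family is the gamma shape family, generalized gamma shape family, Pareto shape family, inverse Gaussian shape family, beta shape family, or the Poisson rate family, then $\ell(G_\theta,G)>\ell(G_{1/\theta},G)$.
   Context: Logarithmic loss: for a forecast $F$ with density (or probability mass function) $f$, $\ell(F,y)=-\log f(y)$, and $\ell(F,G)=\mathbb{E}[-\log f(Y)]$ for $Y\sim G$. Families (parameter $\theta$ is the one named; others fixed): - Normal scale family: $N(0,\theta^2)$. Laplace scale family: density $(2\theta)^{-1}e^{-|x|/\theta}$, $x\in\mathbb{R}$. Exponential scale family: density $\theta^{-1}e^{-x/\theta}$, $x>0$. - Generalized gamma scale family (fixed $k,\gamma>0$): density $\Gamma(k/\gamma)^{-1}\theta^{-k}\gamma x^{k-1}e^{-(x/\theta)^\gamma}$, $x>0$; the gamma scale family is the case $\gamma=1$, the Weibull scale family the case $k=\gamma$. - Log-normal log-scale family (fixed $\mu\in\mathbb{R}$): density $(x\theta\sqrt{2\pi})^{-1}e^{-(\log x-\mu)^2/(2\theta^2)}$, $x>0$. - Inverse gamma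 scale family (fixed $k>0$): density $\Gamma(k)^{-1}\theta^k x^{-k-1}e^{-\theta/x}$, $x>0$. - Generalized gamma shape family (fixed $\sigma,\gamma>0$): density $\Gamma(\theta/\gamma)^{-1}\sigma^{-\theta}\gamma x^{\theta-1}e^{-(x/\sigma)^\gamma}$, $x>0$; the gamma shape family is the case $\gamma=1$. - Pareto shape family (fixed $m>0$): density $\theta m^\theta x^{-\theta-1}$, $x\ge m$. - Inverse Gaussian shape family (fixed $\mu>0$): density $\sqrt{\theta/(2\pi x^3)}\,e^{-\theta(x-\mu)^2/(2\mu^2x)}$, $x>0$. - Beta shape family (fixed $\beta>0$): density $x^{\theta-1}(1-x)^{\beta-1}\Gamma(\theta+\beta)/(\Gamma(\theta)\Gamma(\beta))$, $x\in(0,1)$. - Poisson rate family: probability mass function $\theta^k e^{-\theta}/k!$, $k\in\{0,1,2,\dots\}$. *)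

theory Defs
  imports "HOL-Probability.Probability"
begin

definition logloss :: "real set \<Rightarrow> (real \<Rightarrow> real) \<Rightarrow> (real \<Rightarrow> real) \<Rightarrow> real" where
  "logloss S f g = (LINT y:S|lborel. g y * (- ln (f y)))"

definition logloss_discrete :: "(nat \<Rightarrow> real) \<Rightarrow> (nat \<Rightarrow> real) \<Rightarrow> real" where
  "logloss_discrete f g = (\<Sum>k. g k * (- ln (f k)))"

(* Normal scale family N(0,theta^2): normal_density 0 theta from HOL-Probability *)

definition laplace_scale_dens :: "real \<Rightarrow> real \<Rightarrow> real" where
  "laplace_scale_dens \<theta> x = exp (- \<bar>x\<bar> / \<theta>) / (2 * \<theta>)"

definition exp_scale_dens :: "real \<Rightarrow> real \<Rightarrow> real" where
  "exp_scale_dens \<theta> x = exp (- x / \<theta>) / \<theta>"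

definition gengamma_scale_dens :: "real \<Rightarrow> real \<Rightarrow> real \<Rightarrow> real \<Rightarrow> real" where
  "gengamma_scale_dens k \<gamma> \<theta> x =
     \<gamma> * x powr (k - 1) * exp (- ((x / \<theta>) powr \<gamma>)) / (Gamma (k / \<gamma>) * \<theta> powr k)"

definition lognormal_logscale_dens :: "real \<Rightarrow> real \<Rightarrow> real \<Rightarrow> real" where
  "lognormal_logscale_dens \<mu> \<theta> x =
     exp (- (ln x - \<mu>)\<^sup>2 / (2 * \<theta>\<^sup>2)) / (x * \<theta> * sqrt (2 * pi))"

definition invgamma_scale_dens :: "real \<Rightarrow> real \<Rightarrow> real \<Rightarrow> real" where
  "invgamma_scale_dens k \<theta> x = \<theta> powr k * x powr (- k - 1) * exp (- \<theta> / x) / Gamma k"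

definition gengamma_shape_dens :: "real \<Rightarrow> real \<Rightarrow> real \<Rightarrow> real \<Rightarrow> real" where
  "gengamma_shape_dens \<sigma> \<gamma> \<theta> x =
     \<gamma> * x powr (\<theta> - 1) * exp (- ((x / \<sigma>) powr \<gamma>)) / (Gamma (\<theta> / \<gamma>) * \<sigma> powr \<theta>)"

definition pareto_shape_dens :: "real \<Rightarrow> real \<Rightarrow> real \<Rightarrow> real" where
  "pareto_shape_dens m \<theta> x = \<theta> * m powr \<theta> * x powr (- \<theta> - 1)"

definition invgauss_shape_dens :: "real \<Rightarrow> real \<Rightarrow> real \<Rightarrow> real" where
  "invgauss_shape_dens \<mu> \<theta> x =
     sqrt (\<theta> / (2 * pi * x ^ 3)) * exp (- \<theta> * (x - \<mu>)\<^sup>2 / (2 * \<mu>\<^sup>2 * x))"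

definition beta_shape_dens :: "real \<Rightarrow> real \<Rightarrow> real \<Rightarrow> real" where
  "beta_shape_dens \<beta> \<theta> x =
     x powr (\<theta> - 1) * (1 - x) powr (\<beta> - 1) * Gamma (\<theta> + \<beta>) / (Gamma \<theta> * Gamma \<beta>)"

definition poisson_rate_pmf :: "real \<Rightarrow> nat \<Rightarrow> real" where
  "poisson_rate_pmf \<theta> k = \<theta> ^ k * exp (- \<theta>) / fact k"

end

theory Submission
  imports Defs
begin

text \<open>For each family the forecast density is log-affine in at most two statistics,
  - ln f_\<theta>(y) = a(\<theta>) + b(\<theta>) u(y) + c(\<theta>) v(y), so the loss under G = G_1 is
  a(\<theta>) + b(\<theta>) E u(Y) + c(\<theta>) E v(Y). The expectations under G_1 come from Gamma and Beta
  integrals, from a substitution that reduces to the normal law (log-normal, inverse Gaussian), or,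
  for E ln Y in the gamma and beta shape families, from differentiating the Mellin transform of
  the density at 0. Expectations whose coefficient does not depend on \<theta> cancel when the losses
  of G_\<theta> and G_(1/\<theta>) are compared. What remains reduces to 2 ln u < u - 1/u for u > 1 in the
  scale, Pareto, inverse Gaussian and Poisson cases, and in the gamma and beta shape cases to
  inequalities between ln Gamma and Digamma, proved by comparing the series of Digamma termwise.\<close>

section \<open>Absolutely integrable functions\<close>

definition has_abs_integral :: "(real \<Rightarrow> real) \<Rightarrow> real \<Rightarrow> real set \<Rightarrow> bool"
    (infixr \<open>has'_abs'_integral\<close> 46) where
  "(f has_abs_integral I) S \<longleftrightarrow> f absolutely_integrable_on S \<and> integral S f = I"

lemma has_abs_integral_integrable_on:
  "(f has_abs_integral I) S \<Longrightarrow> f integrable_on S"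
  unfolding has_abs_integral_def using set_lebesgue_integral_eq_integral(1) by blast

lemma has_abs_integralI:
  "f absolutely_integrable_on S \<Longrightarrow> (f has_integral I) S \<Longrightarrow> (f has_abs_integral I) S"
  by (simp add: has_abs_integral_def integral_unique)

lemma has_abs_integral_has_integral:
  "(f has_abs_integral I) S \<Longrightarrow> (f has_integral I) S"
  using has_abs_integral_integrable_on by (auto simp: has_abs_integral_def)

lemma has_abs_integral_cong:
  assumes "\<And>x. x \<in> S \<Longrightarrow> f x = g x"
  shows "(f has_abs_integral I) S \<longleftrightarrow> (g has_abs_integral I) S"
proof -
  have "f absolutely_integrable_on S \<longleftrightarrow> g absolutely_integrable_on S"
    using assms by (intro set_integrable_cong) auto
  then show ?thesis
    unfolding has_abs_integral_def using integral_cong[of S f g] assms by auto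
qed

lemma has_abs_integral_eq:
  "(f has_abs_integral I) S \<Longrightarrow> (\<And>x. x \<in> S \<Longrightarrow> g x = f x) \<Longrightarrow> I = J \<Longrightarrow> (g has_abs_integral J) S"
  using has_abs_integral_cong[of S g f] by auto

lemma has_abs_integral_add:
  assumes "(f has_abs_integral I) S" "(g has_abs_integral J) S"
  shows "((\<lambda>x. f x + g x) has_abs_integral I + J) S"
  using assms has_abs_integral_integrable_on[OF assms(1)] has_abs_integral_integrable_on[OF assms(2)]
  unfolding has_abs_integral_def by (auto intro: set_integral_add integral_add)

lemma has_abs_integral_cmult:
  "(f has_abs_integral I) S \<Longrightarrow> ((\<lambda>x. c * f x) has_abs_integral c * I) S"
  unfolding has_abs_integral_def by (auto intro: set_integrable_mult_right)

lemma has_abs_integral_0: "((\<lambda>_. 0) has_abs_integral 0) S"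
  by (simp add: has_abs_integral_def)

lemma has_abs_integral_nonneg:
  assumes "(f has_integral I) S" "\<And>x. x \<in> S \<Longrightarrow> 0 \<le> f x"
  shows "(f has_abs_integral I) S"
  using assms nonnegative_absolutely_integrable_1[of f S] by (auto intro: has_abs_integralI)

lemma has_abs_integral_spike_set:
  assumes "negligible (S - T)" "negligible (T - S)"
  shows "(f has_abs_integral I) S \<longleftrightarrow> (f has_abs_integral I) T"
proof -
  have "negligible {x \<in> S - T. f x \<noteq> 0}" "negligible {x \<in> T - S. f x \<noteq> 0}"
    using assms by (auto intro: negligible_subset)
  from absolutely_integrable_spike_set_eq[OF this] integral_spike_set[OF this]
  show ?thesis by (simp add: has_abs_integral_def)
qed

lemma has_abs_integral_Un:
  assumes "(f has_abs_integral I) S" "(f has_abs_integral J) T" "S \<inter> T = {}"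
  shows "(f has_abs_integral I + J) (S \<union> T)"
  using assms has_abs_integral_integrable_on[OF assms(1)] has_abs_integral_integrable_on[OF assms(2)]
  unfolding has_abs_integral_def by (auto intro: absolutely_integrable_Un integral_Un)

lemma has_abs_integral_reflect:
  "(f has_abs_integral I) {0<..} \<Longrightarrow> ((\<lambda>x. f (- x)) has_abs_integral I) {..<0}"
  using has_absolute_integral_reflect_real[of "{..<0}" "{0<..}" f I]
  by (auto simp: has_abs_integral_def)

lemma has_abs_integral_even:
  assumes "\<And>x. f (- x) = f x" "(f has_abs_integral I) {0<..}"
  shows "(f has_abs_integral 2 * I) UNIV"
proof -
  have "(f has_abs_integral I + I) ({..<0} \<union> {0<..})"
    using has_abs_integral_reflect[OF assms(2)] assms by (intro has_abs_integral_Un) auto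
  moreover have "negligible (UNIV - ({..<0} \<union> {0::real<..}))"
    by (rule negligible_subset[of "{0}"]) auto
  ultimately show ?thesis
    using has_abs_integral_spike_set[of "{..<0} \<union> {0<..}" UNIV f] by simp
qed

lemma has_abs_integral_change_of_variables:
  assumes "S \<in> sets lebesgue"
    and "\<And>x. x \<in> S \<Longrightarrow> (g has_field_derivative g' x) (at x within S)"
    and "inj_on g S" and "(f has_abs_integral I) (g ` S)"
  shows "((\<lambda>x. \<bar>g' x\<bar> * f (g x)) has_abs_integral I) S"
  using has_absolute_integral_change_of_variables_1'[of S g g' f I] assms
  by (simp add: has_abs_integral_def)

lemma has_abs_integral_inversion:
  fixes f :: "real \<Rightarrow> real"
  assumes "c > 0" "(f has_abs_integral I) {0<..}"
  shows "((\<lambda>x. c / x\<^sup>2 * f (c / x)) has_abs_integral I) {0<..}"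
proof -
  have "(\<lambda>x. c / x) ` {0<..} = {0<..}"
  proof (intro equalityI subsetI)
    fix y :: real assume "y \<in> {0<..}"
    then show "y \<in> (\<lambda>x. c / x) ` {0<..}" using assms by (intro image_eqI[of _ _ "c / y"]) auto
  qed (use assms in auto)
  moreover have "((\<lambda>x. c / x) has_field_derivative - (c / x\<^sup>2)) (at x within {0<..})"
    if "x \<in> {0<..}" for x
    using that by (auto intro!: derivative_eq_intros simp: power2_eq_square field_simps)
  ultimately have "((\<lambda>x. \<bar>- (c / x\<^sup>2)\<bar> * f (c / x)) has_abs_integral I) {0<..}"
    using assms by (intro has_abs_integral_change_of_variables) (auto simp: inj_on_def)
  then show ?thesis
    by (rule has_abs_integral_eq) (use assms in auto)
qed

lemma has_abs_integral_lborel: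
  assumes "f \<in> borel_measurable borel" "integrable lborel f"
  shows "(f has_abs_integral (\<integral>x. f x \<partial>lborel)) UNIV"
proof -
  have "integrable lebesgue f" using assms by (simp add: integrable_completion)
  then have "f absolutely_integrable_on UNIV" by (simp add: set_integrable_def)
  moreover have "integral UNIV f = (\<integral>x. f x \<partial>lborel)"
    using set_lebesgue_integral_eq_integral(2)[OF calculation] assms(1)
    by (simp add: set_lebesgue_integral_def integral_completion)
  ultimately show ?thesis by (simp add: has_abs_integral_def)
qed

lemma absolutely_integrable_dominated:
  fixes f g :: "real \<Rightarrow> real"
  assumes "S \<in> sets lebesgue" "continuous_on S f" "g integrable_on S"
    and "\<And>x. x \<in> S \<Longrightarrow> \<bar>f x\<bar> \<le> g x"
  shows "f absolutely_integrable_on S"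
  using assms
  by (intro measurable_bounded_by_integrable_imp_absolutely_integrable[where g = g]
        continuous_imp_measurable_on_sets_lebesgue) auto

lemma logloss_eq_integral:
  assumes "S \<in> sets borel" "continuous_on S h" "(h has_abs_integral I) S"
    and "\<And>y. y \<in> S \<Longrightarrow> g y * - ln (f y) = h y"
  shows "logloss S f g = I"
proof -
  have "logloss S f g = (LINT y:S|lborel. h y)"
    unfolding logloss_def using assms(1,4) by (intro set_lebesgue_integral_cong) auto
  also have "\<dots> = (LINT y:S|lebesgue. h y)"
    using borel_measurable_continuous_on_indicator[OF assms(1,2)]
    by (simp add: set_lebesgue_integral_def integral_completion)
  also have "\<dots> = I"
    using assms(3) set_lebesgue_integral_eq_integral(2) by (auto simp: has_abs_integral_def)
  finally show ?thesis .
qed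

lemma logloss_eq_affine:
  assumes "S \<in> sets borel" "continuous_on S g" "continuous_on S u" "continuous_on S v"
    and "(g has_abs_integral 1) S" "((\<lambda>y. g y * u y) has_abs_integral U) S"
    and "((\<lambda>y. g y * v y) has_abs_integral V) S"
    and "\<And>y. y \<in> S \<Longrightarrow> - ln (f y) = a + b * u y + c * v y"
  shows "logloss S f g = a + b * U + c * V"
proof -
  have "((\<lambda>y. a * g y + b * (g y * u y) + c * (g y * v y)) has_abs_integral a * 1 + b * U + c * V) S"
    using assms(5-7) by (intro has_abs_integral_add has_abs_integral_cmult)
  then have "logloss S f g = a * 1 + b * U + c * V"
  proof (rule logloss_eq_integral[OF assms(1), rotated])
    show "continuous_on S (\<lambda>y. a * g y + b * (g y * u y) + c * (g y * v y))"
      using assms(2-4) by (intro continuous_intros)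
    show "g y * - ln (f y) = a * g y + b * (g y * u y) + c * (g y * v y)" if "y \<in> S" for y
      using assms(8)[OF that] by (simp add: algebra_simps)
  qed
  then show ?thesis by simp
qed

lemma logloss_cong:
  assumes "S \<in> sets borel" "\<And>y. y \<in> S \<Longrightarrow> f y = f' y" "\<And>y. y \<in> S \<Longrightarrow> g y = g' y"
  shows "logloss S f g = logloss S f' g'"
  unfolding logloss_def using assms by (intro set_lebesgue_integral_cong) auto

lemma two_ln_less_diff_inverse:
  fixes u :: real
  assumes "u > 1"
  shows "2 * ln u < u - 1 / u"
proof -
  let ?f = "\<lambda>u::real. u - 1 / u - 2 * ln u"
  have "?f 1 < ?f u"
  proof (rule DERIV_pos_imp_increasing_open[OF assms])
    fix x :: real assume x: "1 < x" "x < u"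
    have "(?f has_real_derivative (1 - 1 / x)\<^sup>2) (at x)"
      using x by (auto intro!: derivative_eq_intros simp: field_simps power2_eq_square)
    moreover have "(1 - 1 / x)\<^sup>2 > 0" using x by simp
    ultimately show "\<exists>y. (?f has_real_derivative y) (at x) \<and> 0 < y" by blast
  qed (use assms in \<open>auto intro!: continuous_intros\<close>)
  then show ?thesis by simp
qed

lemma abs_ln_le_powr:
  fixes x \<eta> :: real
  assumes "x > 0" "\<eta> > 0"
  shows "\<bar>ln x\<bar> \<le> (x powr \<eta> + x powr (- \<eta>)) / \<eta>"
proof -
  have "\<eta> * \<bar>ln x\<bar> \<le> exp (\<eta> * \<bar>ln x\<bar>)"
    using exp_ge_add_one_self[of "\<eta> * \<bar>ln x\<bar>"] by linarith
  also have "\<dots> \<le> exp (\<eta> * ln x) + exp (- \<eta> * ln x)"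
    by (cases "ln x \<ge> 0") (auto simp: add_increasing add_increasing2)
  also have "\<dots> = x powr \<eta> + x powr (- \<eta>)"
    using assms by (simp add: powr_def mult_ac)
  finally show ?thesis using assms by (simp add: field_simps)
qed

lemma abs_exp_minus_one_le:
  fixes u :: real
  shows "\<bar>exp u - 1\<bar> \<le> \<bar>u\<bar> * exp \<bar>u\<bar>"
proof (cases "u \<ge> 0")
  case True
  have "exp u * (1 - u) \<le> exp u * exp (- u)"
    using exp_ge_add_one_self[of "- u"] by (intro mult_left_mono) auto
  then show ?thesis using True by (simp add: exp_minus algebra_simps)
next
  case False
  then have "\<bar>exp u - 1\<bar> = 1 - exp u" by simp
  then have "\<bar>exp u - 1\<bar> \<le> \<bar>u\<bar>" using exp_ge_add_one_self[of u] False by linarith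
  also have "\<dots> \<le> \<bar>u\<bar> * exp \<bar>u\<bar>" by (simp add: mult_le_cancel_left1)
  finally show ?thesis .
qed

lemma abs_powr_diff_quotient_le:
  fixes x h \<eta> :: real
  assumes "x > 0" "0 < h" "h \<le> \<eta>"
  shows "\<bar>(x powr h - 1) / h\<bar> \<le> (x powr (2 * \<eta>) + x powr (- (2 * \<eta>))) / \<eta>"
proof -
  define t where "t = ln x"
  have "\<eta> > 0" using assms by linarith
  have "\<bar>(x powr h - 1) / h\<bar> = \<bar>exp (h * t) - 1\<bar> / h"
    using assms by (simp add: powr_def t_def abs_divide)
  also have "\<dots> \<le> \<bar>h * t\<bar> * exp \<bar>h * t\<bar> / h"
    using assms by (intro divide_right_mono abs_exp_minus_one_le) auto
  also have "\<dots> = \<bar>t\<bar> * exp (h * \<bar>t\<bar>)" using assms by (simp add: abs_mult)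
  also have "\<dots> \<le> \<bar>t\<bar> * exp (\<eta> * \<bar>t\<bar>)"
    using assms by (intro mult_left_mono) (auto intro: mult_right_mono)
  also have "\<dots> \<le> exp (\<eta> * \<bar>t\<bar>) / \<eta> * exp (\<eta> * \<bar>t\<bar>)"
  proof (rule mult_right_mono)
    have "\<eta> * \<bar>t\<bar> \<le> exp (\<eta> * \<bar>t\<bar>)" using exp_ge_add_one_self[of "\<eta> * \<bar>t\<bar>"] by linarith
    then show "\<bar>t\<bar> \<le> exp (\<eta> * \<bar>t\<bar>) / \<eta>" using assms by (simp add: field_simps)
  qed simp
  also have "\<dots> = exp (2 * \<eta> * \<bar>t\<bar>) / \<eta>" by (simp add: exp_add[symmetric])
  also have "\<dots> \<le> (exp (2 * \<eta> * t) + exp (- (2 * \<eta>) * t)) / \<eta>"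
    using \<open>\<eta> > 0\<close> by (intro divide_right_mono) (cases "t \<ge> 0", auto simp: add_increasing add_increasing2)
  also have "\<dots> = (x powr (2 * \<eta>) + x powr (- (2 * \<eta>))) / \<eta>"
    using assms by (simp add: powr_def t_def mult_ac)
  finally show ?thesis .
qed

lemma difference_quotients_tendsto:
  fixes F :: "real \<Rightarrow> real"
  assumes "(F has_real_derivative D) (at 0)" "filterlim h (at 0) sequentially"
  shows "(\<lambda>n. (F (h n) - F 0) / h n) \<longlonglongrightarrow> D"
proof -
  have "((\<lambda>y. (F y - F 0) / (y - 0)) \<longlongrightarrow> D) (at 0)"
    using assms(1) by (simp add: has_field_derivative_iff)
  from filterlim_compose[OF this assms(2)] show ?thesis by simp
qed

lemma filterlim_divide_Suc_at_0:
  fixes \<eta> :: real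
  assumes "\<eta> > 0"
  shows "filterlim (\<lambda>n. \<eta> / real (Suc n)) (at 0) sequentially"
proof -
  have "(\<lambda>n. \<eta> / real (Suc n)) \<longlonglongrightarrow> 0"
    using LIMSEQ_Suc[OF lim_const_over_n] .
  then show ?thesis
    using assms by (auto simp: filterlim_at intro!: always_eventually)
qed

section \<open>Standard integrals\<close>

lemma pos_notin_nonpos_Ints: "(x :: real) > 0 \<Longrightarrow> x \<notin> \<int>\<^sub>\<le>\<^sub>0"
  by (auto dest: nonpos_Ints_nonpos)

lemma has_abs_integral_Gamma:
  assumes "a > 0"
  shows "((\<lambda>t. t powr (a - 1) * exp (- t)) has_abs_integral Gamma a) {0<..}"
proof (rule has_abs_integral_nonneg)
  have "((\<lambda>t. t powr (a - 1) * exp (- t)) has_integral Gamma a) {0..}"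
    using Gamma_integral_real[OF assms] by (simp add: exp_minus field_simps)
  then show "((\<lambda>t. t powr (a - 1) * exp (- t)) has_integral Gamma a) {0<..}"
    by (rule has_integral_spike_set_eq[THEN iffD1, rotated -1])
       (auto intro: negligible_subset[of "{0}"])
qed auto

lemma has_abs_integral_exp_moments:
  "((\<lambda>u. exp (- u)) has_abs_integral 1) {0::real<..}"
  "((\<lambda>u. u * exp (- u)) has_abs_integral 1) {0::real<..}"
proof -
  show "((\<lambda>u. exp (- u)) has_abs_integral 1) {0::real<..}"
    by (rule has_abs_integral_eq[OF has_abs_integral_Gamma[of 1]]) simp_all
  show "((\<lambda>u. u * exp (- u)) has_abs_integral 1) {0::real<..}"
    by (rule has_abs_integral_eq[OF has_abs_integral_Gamma[of 2]]) (simp_all add: Gamma_numeral)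
qed

lemma bij_betw_scaled_powr:
  fixes \<sigma> \<gamma> :: real
  assumes "\<sigma> > 0" "\<gamma> > 0"
  shows "bij_betw (\<lambda>x. (x / \<sigma>) powr \<gamma>) {0<..} {0<..}"
proof (rule bij_betw_imageI)
  show "inj_on (\<lambda>x. (x / \<sigma>) powr \<gamma>) {0<..}"
  proof (rule inj_onI)
    fix x y :: real assume "x \<in> {0<..}" "y \<in> {0<..}" "(x / \<sigma>) powr \<gamma> = (y / \<sigma>) powr \<gamma>"
    then have "((x / \<sigma>) powr \<gamma>) powr (1 / \<gamma>) = ((y / \<sigma>) powr \<gamma>) powr (1 / \<gamma>)" by simp
    with \<open>x \<in> _\<close> \<open>y \<in> _\<close> show "x = y" using assms by (simp add: powr_powr)
  qed
  show "(\<lambda>x. (x / \<sigma>) powr \<gamma>) ` {0<..} = {0<..}"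
  proof (intro equalityI subsetI)
    fix y :: real assume "y \<in> {0<..}"
    then have "y = ((\<sigma> * y powr (1 / \<gamma>)) / \<sigma>) powr \<gamma>" "\<sigma> * y powr (1 / \<gamma>) \<in> {0<..}"
      using assms by (auto simp: powr_powr)
    then show "y \<in> (\<lambda>x. (x / \<sigma>) powr \<gamma>) ` {0<..}" by blast
  qed (use assms in auto)
qed

lemma has_abs_integral_stretched_exp_moment:
  fixes \<gamma> \<sigma> s :: real
  assumes "\<gamma> > 0" "\<sigma> > 0" "s > -1"
  shows "((\<lambda>x. x powr s * exp (- ((x / \<sigma>) powr \<gamma>)))
           has_abs_integral \<sigma> powr (s + 1) * Gamma ((s + 1) / \<gamma>) / \<gamma>) {0<..}"
proof -
  define g where "g x = (x / \<sigma>) powr \<gamma>" for x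
  define g' where "g' x = \<gamma> / \<sigma> * (x / \<sigma>) powr (\<gamma> - 1)" for x
  define a where "a = (s + 1) / \<gamma>"
  have "a > 0" using assms by (simp add: a_def)
  have "bij_betw g {0<..} {0<..}"
    unfolding g_def using assms by (intro bij_betw_scaled_powr)
  then have "inj_on g {0<..}" "g ` {0<..} = {0<..}"
    by (simp_all add: bij_betw_def)
  moreover have "(g has_field_derivative g' x) (at x within {0<..})" if "x \<in> {0<..}" for x
    using that assms unfolding g_def g'_def
    by (auto intro!: derivative_eq_intros simp: field_simps)
  ultimately have "((\<lambda>x. \<bar>g' x\<bar> * (\<sigma> powr (s + 1) / \<gamma> * (g x powr (a - 1) * exp (- g x))))
                   has_abs_integral \<sigma> powr (s + 1) / \<gamma> * Gamma a) {0<..}"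
    using \<open>g ` {0<..} = {0<..}\<close> has_abs_integral_Gamma[OF \<open>a > 0\<close>]
    by (intro has_abs_integral_change_of_variables has_abs_integral_cmult) auto
  then show ?thesis
  proof (rule has_abs_integral_eq)
    fix x :: real assume "x \<in> {0<..}"
    define t where "t = x / \<sigma>"
    have "t > 0" using \<open>x \<in> _\<close> assms by (auto simp: t_def)
    have "\<gamma> * (a - 1) = s + 1 - \<gamma>" using assms by (simp add: a_def field_simps)
    then have "\<bar>g' x\<bar> * (\<sigma> powr (s + 1) / \<gamma> * (g x powr (a - 1) * exp (- g x)))
        = (\<gamma> / \<sigma> * (\<sigma> powr (s + 1) / \<gamma>)) * (t powr (\<gamma> - 1) * t powr (s + 1 - \<gamma>))
          * exp (- (t powr \<gamma>))"
      using assms \<open>t > 0\<close> by (simp add: g_def g'_def t_def[symmetric] powr_powr abs_mult)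
    also have "t powr (\<gamma> - 1) * t powr (s + 1 - \<gamma>) = t powr s"
      using \<open>t > 0\<close> by (simp add: powr_add[symmetric])
    also have "\<gamma> / \<sigma> * (\<sigma> powr (s + 1) / \<gamma>) = \<sigma> powr s"
      using assms by (simp add: powr_add field_simps)
    also have "\<sigma> powr s * t powr s * exp (- (t powr \<gamma>)) = (\<sigma> * t) powr s * exp (- (t powr \<gamma>))"
      using \<open>t > 0\<close> assms by (simp add: powr_mult)
    finally show "x powr s * exp (- ((x / \<sigma>) powr \<gamma>))
        = \<bar>g' x\<bar> * (\<sigma> powr (s + 1) / \<gamma> * (g x powr (a - 1) * exp (- g x)))"
      using assms by (simp add: t_def)
  qed (simp add: a_def)
qed

lemma has_abs_integral_inverse_Gamma:
  assumes "s > 0"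
  shows "((\<lambda>x. x powr (- s - 1) * exp (- 1 / x)) has_abs_integral Gamma s) {0<..}"
  using has_abs_integral_inversion[OF zero_less_one has_abs_integral_Gamma[OF assms]]
proof (rule has_abs_integral_eq)
  fix x :: real assume "x \<in> {0<..}"
  then have "1 / x\<^sup>2 * (1 / x) powr (s - 1) = x powr (-2) * x powr (1 - s)"
    by (simp add: powr_divide powr_minus powr_diff field_simps power2_eq_square)
  also have "\<dots> = x powr (-2 + (1 - s))" by (rule powr_add[symmetric])
  also have "-2 + (1 - s) = - s - 1" by simp
  finally have "1 / x\<^sup>2 * (1 / x) powr (s - 1) = x powr (- s - 1)" .
  then show "x powr (- s - 1) * exp (- 1 / x) = 1 / x\<^sup>2 * ((1 / x) powr (s - 1) * exp (- (1 / x)))"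
    by (simp only: mult.assoc[symmetric]) simp
qed simp

lemma has_abs_integral_Beta:
  fixes a b :: real
  assumes "a > 0" "b > 0"
  shows "((\<lambda>t. t powr (a - 1) * (1 - t) powr (b - 1)) has_abs_integral Beta a b) {0<..<1}"
proof (rule has_abs_integral_nonneg)
  show "((\<lambda>t. t powr (a - 1) * (1 - t) powr (b - 1)) has_integral Beta a b) {0<..<1}"
    using has_integral_Beta_real[OF assms]
    by (rule has_integral_spike_set_eq[THEN iffD1, rotated -1])
       (auto intro: negligible_subset[of "{0, 1}"])
qed auto

lemma has_abs_integral_normal_moments:
  fixes \<mu> \<sigma> :: real
  assumes "\<sigma> > 0"
  shows "(normal_density \<mu> \<sigma> has_abs_integral 1) UNIV"
    and "((\<lambda>x. normal_density \<mu> \<sigma> x * x) has_abs_integral \<mu>) UNIV"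
    and "((\<lambda>x. normal_density \<mu> \<sigma> x * (x - \<mu>)\<^sup>2) has_abs_integral \<sigma>\<^sup>2) UNIV"
proof -
  have "integrable lborel (\<lambda>x. normal_density \<mu> \<sigma> x * (x - \<mu>) ^ (2 * 1))"
    using integrable_normal_moment[OF assms] .
  moreover have "(\<integral>x. normal_density \<mu> \<sigma> x * (x - \<mu>) ^ (2 * 1) \<partial>lborel) = \<sigma>\<^sup>2"
    using integral_normal_moment_even[where \<mu> = \<mu> and \<sigma> = \<sigma> and k = 1] assms
    by (simp add: fact_numeral)
  ultimately show "((\<lambda>x. normal_density \<mu> \<sigma> x * (x - \<mu>)\<^sup>2) has_abs_integral \<sigma>\<^sup>2) UNIV"
    using has_abs_integral_lborel[of "\<lambda>x. normal_density \<mu> \<sigma> x * (x - \<mu>) ^ (2 * 1)"] by simp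
  show "(normal_density \<mu> \<sigma> has_abs_integral 1) UNIV"
    using has_abs_integral_lborel[of "normal_density \<mu> \<sigma>"] assms
      prob_space_normal_density[OF assms] by (simp add: prob_space_def)
  show "((\<lambda>x. normal_density \<mu> \<sigma> x * x) has_abs_integral \<mu>) UNIV"
    using has_abs_integral_lborel[of "\<lambda>x. normal_density \<mu> \<sigma> x * x"]
      integrable_normal_moment_nz_1[OF assms] integral_normal_moment_nz_1[OF assms] by simp
qed

lemma absolutely_integrable_mult_ln:
  fixes w u :: "real \<Rightarrow> real"
  assumes S: "S \<in> sets lebesgue" "continuous_on S w" "continuous_on S u"
    and pos: "\<And>x. x \<in> S \<Longrightarrow> w x \<ge> 0" "\<And>x. x \<in> S \<Longrightarrow> u x > 0"
    and "\<eta> > 0"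
    and "(\<lambda>x. w x * u x powr \<eta>) absolutely_integrable_on S"
    and "(\<lambda>x. w x * u x powr (- \<eta>)) absolutely_integrable_on S"
  shows "(\<lambda>x. w x * ln (u x)) absolutely_integrable_on S"
proof (rule absolutely_integrable_dominated)
  show "continuous_on S (\<lambda>x. w x * ln (u x))"
    using S pos(2)[THEN less_imp_neq, symmetric] by (intro continuous_intros) auto
  show "(\<lambda>x. (w x * u x powr \<eta> + w x * u x powr (- \<eta>)) / \<eta>) integrable_on S"
    using assms(7,8)
    by (intro set_lebesgue_integral_eq_integral(1) set_integrable_divide set_integral_add)
  fix x assume x: "x \<in> S"
  have "\<bar>w x * ln (u x)\<bar> = w x * \<bar>ln (u x)\<bar>" using pos(1)[OF x] by (simp add: abs_mult)
  also have "\<dots> \<le> w x * ((u x powr \<eta> + u x powr (- \<eta>)) / \<eta>)"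
    using x pos \<open>\<eta> > 0\<close> by (intro mult_left_mono abs_ln_le_powr) auto
  finally show "\<bar>w x * ln (u x)\<bar> \<le> (w x * u x powr \<eta> + w x * u x powr (- \<eta>)) / \<eta>"
    by (simp add: field_simps)
qed (use S in auto)

text \<open>Differentiation under the integral sign at h = 0, justified by dominated convergence of
  the difference quotients (abs_powr_diff_quotient_le).\<close>

lemma has_abs_integral_mult_ln_Mellin:
  fixes w F :: "real \<Rightarrow> real"
  assumes S: "S \<subseteq> {0<..}" "S \<in> sets lebesgue"
    and w: "continuous_on S w" "\<And>x. x \<in> S \<Longrightarrow> w x \<ge> 0"
    and "\<delta> > 0"
    and F: "\<And>h. \<bar>h\<bar> \<le> \<delta> \<Longrightarrow> ((\<lambda>x. w x * x powr h) has_abs_integral F h) S"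
    and F': "(F has_real_derivative F') (at 0)"
  shows "((\<lambda>x. w x * ln x) has_abs_integral F') S"
proof (rule has_abs_integralI)
  show "(\<lambda>x. w x * ln x) absolutely_integrable_on S"
    using S w \<open>\<delta> > 0\<close> F[of \<delta>] F[of "- \<delta>"]
    by (intro absolutely_integrable_mult_ln[where u = "\<lambda>x. x" and \<eta> = \<delta>, simplified])
       (auto simp: has_abs_integral_def)
  define \<eta> where "\<eta> = \<delta> / 2"
  have "\<eta> > 0" using \<open>\<delta> > 0\<close> by (simp add: \<eta>_def)
  define h where "h n = \<eta> / real (Suc n)" for n
  have h: "0 < h n" "h n \<le> \<eta>" "\<bar>h n\<bar> \<le> \<delta>" for n
    using \<open>\<eta> > 0\<close> by (auto simp: h_def \<eta>_def field_simps)
  have h_lim: "filterlim h (at 0) sequentially"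
    unfolding h_def using \<open>\<eta> > 0\<close> by (rule filterlim_divide_Suc_at_0)
  define q where "q n x = w x * ((x powr h n - 1) / h n)" for n x
  have lin: "((\<lambda>x. 1 / h n * (w x * x powr h n) + - 1 / h n * (w x * x powr 0))
          has_abs_integral 1 / h n * F (h n) + - 1 / h n * F 0) S" for n
    using \<open>\<delta> > 0\<close> by (intro has_abs_integral_add has_abs_integral_cmult F h) auto
  have "(q n has_abs_integral (F (h n) - F 0) / h n) S" for n
    using lin[of n] by (rule has_abs_integral_eq) (use S h(1)[of n] in \<open>auto simp: q_def field_simps\<close>)
  then have "(q n has_integral (F (h n) - F 0) / h n) S" for n
    by (rule has_abs_integral_has_integral)
  moreover have "(\<lambda>x. (w x * x powr (2 * \<eta>) + w x * x powr (- (2 * \<eta>))) / \<eta>) integrable_on S"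
    using F[of "2 * \<eta>"] F[of "- (2 * \<eta>)"] \<open>\<eta> > 0\<close>
    by (intro set_lebesgue_integral_eq_integral(1) set_integrable_divide set_integral_add)
       (auto simp: has_abs_integral_def \<eta>_def)
  moreover have "norm (q n x) \<le> (w x * x powr (2 * \<eta>) + w x * x powr (- (2 * \<eta>))) / \<eta>"
    if "x \<in> S" for n x
  proof -
    have "norm (q n x) = w x * \<bar>(x powr h n - 1) / h n\<bar>"
      using w(2)[OF that] by (simp add: q_def abs_mult)
    also have "\<dots> \<le> w x * ((x powr (2 * \<eta>) + x powr (- (2 * \<eta>))) / \<eta>)"
      using that S h w(2) by (intro mult_left_mono abs_powr_diff_quotient_le) auto
    finally show ?thesis by (simp add: field_simps)
  qed
  moreover have "(\<lambda>n. q n x) \<longlonglongrightarrow> w x * ln x" if "x \<in> S" for x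
  proof -
    have "x > 0" using that S by auto
    then have "((\<lambda>y. x powr y) has_real_derivative ln x) (at 0)"
      using has_real_derivative_const_powr[of "\<lambda>y. y" "\<lambda>_. 1" x 0] by simp
    from difference_quotients_tendsto[OF this h_lim] \<open>x > 0\<close>
    show ?thesis unfolding q_def by (intro tendsto_mult_left) simp
  qed
  ultimately show "((\<lambda>x. w x * ln x) has_integral F') S"
    by (intro has_integral_dominated_convergence[OF _ _ _ _ difference_quotients_tendsto[OF F' h_lim]])
       auto
qed

section \<open>Inequalities between ln Gamma and Digamma\<close>

lemma Digamma_diff_sums:
  fixes u v :: real
  assumes "u > 0" "v > 0"
  shows "(\<lambda>k. 1 / (v + real k) - 1 / (u + real k)) sums (Digamma u - Digamma v)"
proof -
  have "(\<lambda>k. inverse (real (Suc k)) - inverse (z + real k)) sums (Digamma z + euler_mascheroni)"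
    if "z > 0" for z :: real
    using summable_Digamma[of z] that by (simp add: Digamma_def summable_sums)
  from sums_diff[OF this[OF assms(1)] this[OF assms(2)]] show ?thesis
    by (simp add: divide_inverse)
qed

lemma Digamma_dilation_gt:
  fixes a t :: real
  assumes "a > 0" "t > 1"
  shows "Digamma a - Digamma (a / t) < t\<^sup>2 * (Digamma (a * t) - Digamma a)"
proof -
  have term_pos: "0 < t\<^sup>2 * (1 / (a + real k) - 1 / (a * t + real k))
                      - (1 / (a / t + real k) - 1 / (a + real k))" for k
  proof -
    have pos: "a + k > 0" "a * t + k > 0" "a + k * t > 0"
      using assms by (auto intro: add_pos_nonneg)
    have "t\<^sup>2 * (a + k * t) - (a * t + k) = a * t * (t - 1) + k * (t ^ 3 - 1)"
      by (simp add: algebra_simps power2_eq_square power3_eq_cube)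
    moreover have "a * t * (t - 1) > 0" "k * (t ^ 3 - 1) \<ge> 0"
      using assms by (simp_all add: one_le_power less_imp_le)
    ultimately have "t\<^sup>2 / (a * t + k) > 1 / (a + k * t)"
      using pos by (simp add: field_simps)
    then have "a * (t - 1) / (a + k) * (t\<^sup>2 / (a * t + k)) > a * (t - 1) / (a + k) * (1 / (a + k * t))"
      using assms pos by (intro mult_strict_left_mono) auto
    then show ?thesis using pos assms by (simp add: field_simps)
  qed
  have sums: "(\<lambda>k. t\<^sup>2 * (1 / (a + real k) - 1 / (a * t + real k))
                     - (1 / (a / t + real k) - 1 / (a + real k)))
      sums (t\<^sup>2 * (Digamma (a * t) - Digamma a) - (Digamma a - Digamma (a / t)))"
    using assms by (intro sums_diff sums_mult Digamma_diff_sums) auto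
  show ?thesis
    using suminf_pos[OF sums_summable[OF sums] term_pos] sums_unique[OF sums] by simp
qed

lemma ln_Gamma_dilation_gt:
  fixes a \<theta> :: real
  assumes "a > 0" "\<theta> > 1"
  shows "ln_Gamma (a * \<theta>) - ln_Gamma (a / \<theta>) > a * (\<theta> - 1 / \<theta>) * Digamma a"
proof -
  define G where "G t = ln_Gamma (a * t) - ln_Gamma (a / t) - a * (t - 1 / t) * Digamma a" for t
  define G' where "G' t = a * Digamma (a * t) + a / t\<^sup>2 * Digamma (a / t) - a * (1 + 1 / t\<^sup>2) * Digamma a"
    for t
  have G': "(G has_real_derivative G' t) (at t within X)" if "t \<ge> 1" for t X
    unfolding G_def G'_def using that assms
    by (auto intro!: derivative_eq_intros simp: power2_eq_square field_simps)
  have "G 1 < G \<theta>"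
  proof (rule DERIV_pos_imp_increasing_open[OF assms(2)])
    fix t :: real assume t: "1 < t" "t < \<theta>"
    have "G' t = a / t\<^sup>2 * (t\<^sup>2 * (Digamma (a * t) - Digamma a) - (Digamma a - Digamma (a / t)))"
      using t by (simp add: G'_def field_simps)
    then have "G' t > 0"
      using Digamma_dilation_gt[OF assms(1) t(1)] assms t by simp
    then show "\<exists>y. (G has_real_derivative y) (at t) \<and> 0 < y"
      using G'[of t UNIV] t by auto
  qed (rule DERIV_continuous_on[OF G'], simp)
  then show ?thesis by (simp add: G_def)
qed

definition dilation_term :: "real \<Rightarrow> real \<Rightarrow> real" where
  "dilation_term t m = t\<^sup>2 * (1 / (1 + m) - 1 / (t + m)) + (1 / (1 + m) - 1 / (1 / t + m))"

lemma dilation_term_eq: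
  fixes t m :: real
  assumes "t > 1" "m \<ge> 0"
  shows "dilation_term t m
           = (t - 1)\<^sup>2 * ((t\<^sup>2 + t + 1) * m + t) / ((1 + m) * (t + m) * (1 + m * t))"
proof -
  have pos: "1 + m > 0" "t + m > 0" "1 + m * t > 0" using assms by (auto intro: add_pos_nonneg)
  have "1 / t + m = (1 + m * t) / t" using assms by (simp add: field_simps)
  then have "1 / (1 + m) - 1 / (1 / t + m) = (1 - t) / ((1 + m) * (1 + m * t))"
    using pos assms by (simp add: field_simps)
  moreover have "1 / (1 + m) - 1 / (t + m) = (t - 1) / ((1 + m) * (t + m))"
    using pos by (simp add: field_simps)
  moreover have "x / (a * b) + y / (a * c) = (x * c + y * b) / (a * b * c)"
    if "a \<noteq> 0" "b \<noteq> 0" "c \<noteq> 0" for a b c x y :: real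
    using that by (simp add: field_simps)
  ultimately have "dilation_term t m
      = (t\<^sup>2 * (t - 1) * (1 + m * t) + (1 - t) * (t + m)) / ((1 + m) * (t + m) * (1 + m * t))"
    using pos unfolding dilation_term_def by simp
  also have "t\<^sup>2 * (t - 1) * (1 + m * t) + (1 - t) * (t + m) = (t - 1)\<^sup>2 * ((t\<^sup>2 + t + 1) * m + t)"
    by (simp add: algebra_simps power2_eq_square)
  finally show ?thesis .
qed

lemma dilation_term_strict_antimono:
  fixes t m m' :: real
  assumes "t > 1" "0 \<le> m" "m < m'"
  shows "dilation_term t m' < dilation_term t m"
proof -
  define A where "A = t\<^sup>2 + t + 1"
  define P where "P m = (1 + m) * (t + m) * (1 + m * t)" for m :: real
  have "A > 0" using assms by (simp add: A_def add_pos_pos)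
  have P: "P m > 0" if "m \<ge> 0" for m using assms that by (simp add: P_def add_pos_nonneg)
  have "(A * m + t) * P m' - (A * m' + t) * P m
      = (m' - m) * (t * A * m * m' * (m + m') + t\<^sup>2 * (m'\<^sup>2 + m * m' + m\<^sup>2)
                    + A\<^sup>2 * m * m' + t * A * (m + m'))"
    unfolding P_def A_def by (simp add: algebra_simps power2_eq_square power3_eq_cube)
  also have "\<dots> > 0"
    using assms \<open>A > 0\<close> by (intro mult_pos_pos add_nonneg_pos add_pos_nonneg) auto
  finally have "(A * m' + t) / P m' < (A * m + t) / P m"
    using P[of m] P[of m'] assms by (simp add: field_simps)
  then have "(t - 1)\<^sup>2 * ((A * m' + t) / P m') < (t - 1)\<^sup>2 * ((A * m + t) / P m)"
    using assms by (intro mult_strict_left_mono) auto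
  then show ?thesis
    using dilation_term_eq[OF assms(1,2)] dilation_term_eq[OF assms(1), of m'] assms
    by (simp add: A_def P_def)
qed

definition Digamma_dilation :: "real \<Rightarrow> real \<Rightarrow> real" where
  "Digamma_dilation m t
     = t\<^sup>2 * (Digamma (t + m) - Digamma (1 + m)) + (Digamma (1 / t + m) - Digamma (1 + m))"

lemma dilation_term_sums:
  fixes m t :: real
  assumes "t > 1" "m \<ge> 0"
  shows "(\<lambda>k. dilation_term t (real k + m)) sums Digamma_dilation m t"
proof -
  have "(\<lambda>k. t\<^sup>2 * (1 / (1 + m + real k) - 1 / (t + m + real k))
             + (1 / (1 + m + real k) - 1 / (1 / t + m + real k))) sums Digamma_dilation m t"
    unfolding Digamma_dilation_def using assms
    by (intro sums_add sums_mult Digamma_diff_sums) (auto intro: add_pos_nonneg)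
  then show ?thesis by (simp add: dilation_term_def add_ac)
qed

lemma Digamma_dilation_strict_antimono:
  fixes \<beta> t :: real
  assumes "\<beta> > 0" "t > 1"
  shows "Digamma_dilation \<beta> t < Digamma_dilation 0 t"
proof -
  have sums: "(\<lambda>k. dilation_term t (real k) - dilation_term t (real k + \<beta>))
                sums (Digamma_dilation 0 t - Digamma_dilation \<beta> t)"
    using dilation_term_sums[of t 0] dilation_term_sums[of t \<beta>] assms by (intro sums_diff) auto
  show ?thesis
    using suminf_pos[OF sums_summable[OF sums]] sums_unique[OF sums] assms
      dilation_term_strict_antimono by auto
qed

lemma ln_Gamma_beta_dilation_gt:
  fixes \<beta> \<theta> :: real
  assumes "\<beta> > 0" "\<theta> > 1"
  shows "ln_Gamma \<theta> - ln_Gamma (1 / \<theta>) - ln_Gamma (\<theta> + \<beta>) + ln_Gamma (1 / \<theta> + \<beta>)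
         + (\<theta> - 1 / \<theta>) * (Digamma (1 + \<beta>) - Digamma 1) > 0"
proof -
  define c where "c = Digamma (1 + \<beta>) - Digamma (1::real)"
  define H where "H t = ln_Gamma t - ln_Gamma (1 / t) - ln_Gamma (t + \<beta>) + ln_Gamma (1 / t + \<beta>)
                        + (t - 1 / t) * c" for t
  define H' where "H' t = Digamma t + Digamma (1 / t) / t\<^sup>2 - Digamma (t + \<beta>)
                        - Digamma (1 / t + \<beta>) / t\<^sup>2 + (1 + 1 / t\<^sup>2) * c" for t
  have H': "(H has_real_derivative H' t) (at t within X)" if "t \<ge> 1" for t X
    unfolding H_def H'_def using that assms
    by (auto intro!: derivative_eq_intros simp: power2_eq_square field_simps add_pos_pos)
  have "H 1 < H \<theta>"
  proof (rule DERIV_pos_imp_increasing_open[OF assms(2)])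
    fix t :: real assume t: "1 < t" "t < \<theta>"
    have "H' t = (Digamma_dilation 0 t - Digamma_dilation \<beta> t) / t\<^sup>2"
      using t by (simp add: H'_def Digamma_dilation_def c_def field_simps)
    then have "H' t > 0"
      using Digamma_dilation_strict_antimono[OF assms(1) t(1)] t by simp
    then show "\<exists>y. (H has_real_derivative y) (at t) \<and> 0 < y"
      using H'[of t UNIV] t by auto
  qed (rule DERIV_continuous_on[OF H'], simp)
  then show ?thesis by (simp add: H_def c_def)
qed

section \<open>Generalized gamma families\<close>

lemma continuous_on_gengamma_scale_dens:
  assumes "\<gamma> > 0" "k > 0" "\<theta> > 0"
  shows "continuous_on {0<..} (gengamma_scale_dens k \<gamma> \<theta>)"
proof -
  have "Gamma (k / \<gamma>) > 0" using assms by simp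
  then have "Gamma (k / \<gamma>) \<noteq> 0" by simp
  then show ?thesis
    unfolding gengamma_scale_dens_def using assms by (intro continuous_intros) auto
qed

lemma gengamma_scale_dens_moment:
  fixes k \<gamma> \<theta> s :: real
  assumes "k > 0" "\<gamma> > 0" "\<theta> > 0" "s > - k"
  shows "((\<lambda>x. gengamma_scale_dens k \<gamma> \<theta> x * x powr s)
           has_abs_integral \<theta> powr s * Gamma ((k + s) / \<gamma>) / Gamma (k / \<gamma>)) {0<..}"
proof -
  define c where "c = \<gamma> / (Gamma (k / \<gamma>) * \<theta> powr k)"
  have "((\<lambda>x. c * (x powr (k - 1 + s) * exp (- ((x / \<theta>) powr \<gamma>))))
          has_abs_integral c * (\<theta> powr (k - 1 + s + 1) * Gamma ((k - 1 + s + 1) / \<gamma>) / \<gamma>)) {0<..}"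
    using assms by (intro has_abs_integral_cmult has_abs_integral_stretched_exp_moment) auto
  then show ?thesis
  proof (rule has_abs_integral_eq)
    fix x :: real assume "x \<in> {0<..}"
    then show "gengamma_scale_dens k \<gamma> \<theta> x * x powr s
        = c * (x powr (k - 1 + s) * exp (- ((x / \<theta>) powr \<gamma>)))"
      by (simp add: gengamma_scale_dens_def c_def powr_add)
  next
    have "Gamma (k / \<gamma>) > 0" using assms by simp
    then show "c * (\<theta> powr (k - 1 + s + 1) * Gamma ((k - 1 + s + 1) / \<gamma>) / \<gamma>)
        = \<theta> powr s * Gamma ((k + s) / \<gamma>) / Gamma (k / \<gamma>)"
      using assms by (simp add: c_def powr_add)
  qed
qed

lemma gengamma_scale_logloss:
  fixes k \<gamma> \<theta> :: real
  assumes "k > 0" "\<gamma> > 0" "\<theta> > 0"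
  shows "logloss {0<..} (gengamma_scale_dens k \<gamma> \<theta>) (gengamma_scale_dens k \<gamma> 1)
    = ln (Gamma (k / \<gamma>)) - ln \<gamma> + k * ln \<theta> + \<theta> powr (- \<gamma>) * (k / \<gamma>)
      + (1 - k) * integral {0<..} (\<lambda>x. gengamma_scale_dens k \<gamma> 1 x * ln x)"
proof (rule logloss_eq_affine[where u = "\<lambda>x. x powr \<gamma>" and v = ln])
  let ?g = "gengamma_scale_dens k \<gamma> 1"
  have "Gamma (k / \<gamma>) > 0" using assms by simp
  have moment: "((\<lambda>x. ?g x * x powr s) has_abs_integral Gamma ((k + s) / \<gamma>) / Gamma (k / \<gamma>)) {0<..}"
    if "s > - k" for s
    using gengamma_scale_dens_moment[OF assms(1,2) zero_less_one that] by simp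
  show "continuous_on {0<..} ?g" using assms by (intro continuous_on_gengamma_scale_dens) simp_all
  show "(?g has_abs_integral 1) {0<..}"
    using moment[of 0] assms \<open>Gamma (k / \<gamma>) > 0\<close> by (auto elim!: has_abs_integral_eq)
  have "Gamma ((k + \<gamma>) / \<gamma>) = k / \<gamma> * Gamma (k / \<gamma>)"
    using Gamma_plus1[OF pos_notin_nonpos_Ints[of "k / \<gamma>"]] assms by (simp add: add_divide_distrib)
  then show "((\<lambda>x. ?g x * x powr \<gamma>) has_abs_integral k / \<gamma>) {0<..}"
    using moment[of \<gamma>] assms \<open>Gamma (k / \<gamma>) > 0\<close> by simp
  have "(\<lambda>x. ?g x * ln x) absolutely_integrable_on {0<..}"
  proof (rule absolutely_integrable_mult_ln[where u = "\<lambda>x. x" and \<eta> = "k / 2", simplified])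
    show "(\<lambda>x. ?g x * x powr (k / 2)) absolutely_integrable_on {0<..}"
         "(\<lambda>x. ?g x * x powr (- (k / 2))) absolutely_integrable_on {0<..}"
      using moment[of "k / 2"] moment[of "- (k / 2)"] assms by (auto simp: has_abs_integral_def)
    show "?g x \<ge> 0" if "x \<in> {0<..}" for x
      using that assms by (simp add: gengamma_scale_dens_def)
  qed (use assms continuous_on_gengamma_scale_dens in auto)
  then show "((\<lambda>x. ?g x * ln x) has_abs_integral integral {0<..} (\<lambda>x. ?g x * ln x)) {0<..}"
    by (simp add: has_abs_integral_def)
  show "- ln (gengamma_scale_dens k \<gamma> \<theta> x)
      = ln (Gamma (k / \<gamma>)) - ln \<gamma> + k * ln \<theta> + \<theta> powr (- \<gamma>) * x powr \<gamma> + (1 - k) * ln x"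
    if "x \<in> {0<..}" for x
  proof -
    define G where "G = Gamma (k / \<gamma>)"
    have "G > 0" using assms by (simp add: G_def)
    with that have "ln (gengamma_scale_dens k \<gamma> \<theta> x)
        = ln \<gamma> + (k - 1) * ln x - x powr \<gamma> * \<theta> powr (- \<gamma>) - ln G - k * ln \<theta>"
      using assms unfolding gengamma_scale_dens_def G_def[symmetric]
      by (simp add: ln_mult ln_div ln_powr powr_divide powr_minus divide_inverse ln_inverse
                    powr_mult inverse_powr)
    then show ?thesis by (simp add: G_def algebra_simps)
  qed
qed (auto intro!: continuous_intros)

lemma gengamma_scale_logloss_less:
  fixes k \<gamma> \<theta> :: real
  assumes "k > 0" "\<gamma> > 0" "\<theta> > 1"
  shows "logloss {0<..} (gengamma_scale_dens k \<gamma> \<theta>) (gengamma_scale_dens k \<gamma> 1)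
       < logloss {0<..} (gengamma_scale_dens k \<gamma> (1 / \<theta>)) (gengamma_scale_dens k \<gamma> 1)"
proof -
  define u where "u = \<theta> powr \<gamma>"
  have "u > 1" using assms by (simp add: u_def)
  have "0 < k / \<gamma> * (u - 1 / u - 2 * ln u)"
    using two_ln_less_diff_inverse[OF \<open>u > 1\<close>] assms by simp
  moreover have "ln u = \<gamma> * ln \<theta>" using assms by (simp add: u_def ln_powr)
  moreover have "(1 / \<theta>) powr (- \<gamma>) = u" using assms by (simp add: u_def powr_minus powr_divide)
  moreover have "\<theta> powr (- \<gamma>) = 1 / u" using assms by (simp add: u_def powr_minus divide_inverse)
  moreover have "ln (1 / \<theta>) = - ln \<theta>" using assms by (simp add: ln_div)
  ultimately show ?thesis
    using assms by (simp add: gengamma_scale_logloss field_simps)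
qed

lemma exp_scale_logloss_less:
  assumes "\<theta> > 1"
  shows "logloss {0<..} (exp_scale_dens \<theta>) (exp_scale_dens 1)
           < logloss {0<..} (exp_scale_dens (1 / \<theta>)) (exp_scale_dens 1)"
proof -
  have "logloss {0<..} (exp_scale_dens t) (exp_scale_dens 1)
          = logloss {0<..} (gengamma_scale_dens 1 1 t) (gengamma_scale_dens 1 1 1)" if "t > 0" for t
    using that by (intro logloss_cong) (auto simp: exp_scale_dens_def gengamma_scale_dens_def)
  then show ?thesis
    using gengamma_scale_logloss_less[of 1 1 \<theta>] assms by simp
qed

lemma gengamma_shape_dens_1_eq: "gengamma_shape_dens \<sigma> \<gamma> 1 = gengamma_scale_dens 1 \<gamma> \<sigma>"
  by (simp add: fun_eq_iff gengamma_shape_dens_def gengamma_scale_dens_def)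

lemma gengamma_shape_mean_ln:
  fixes \<sigma> \<gamma> :: real
  assumes "\<sigma> > 0" "\<gamma> > 0"
  shows "((\<lambda>x. gengamma_shape_dens \<sigma> \<gamma> 1 x * ln x)
           has_abs_integral ln \<sigma> + Digamma (1 / \<gamma>) / \<gamma>) {0<..}"
proof (rule has_abs_integral_mult_ln_Mellin)
  define F where "F h = \<sigma> powr h * Gamma ((1 + h) / \<gamma>) / Gamma (1 / \<gamma>)" for h
  show "((\<lambda>x. gengamma_shape_dens \<sigma> \<gamma> 1 x * x powr h) has_abs_integral F h) {0<..}"
    if "\<bar>h\<bar> \<le> 1 / 2" for h
    using gengamma_scale_dens_moment[of 1 \<gamma> \<sigma> h] that assms
    by (simp add: gengamma_shape_dens_1_eq F_def)
  have "Gamma (1 / \<gamma>) \<noteq> 0" using assms by (simp add: Gamma_nonzero pos_notin_nonpos_Ints)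
  then show "(F has_real_derivative ln \<sigma> + Digamma (1 / \<gamma>) / \<gamma>) (at 0)"
    unfolding F_def using assms pos_notin_nonpos_Ints[of "1 / \<gamma>"]
    by (auto intro!: derivative_eq_intros simp: field_simps)
qed (use assms continuous_on_gengamma_scale_dens[of \<gamma> 1 \<sigma>] in
       \<open>auto simp: gengamma_shape_dens_1_eq gengamma_scale_dens_def\<close>)

lemma gengamma_shape_logloss:
  fixes \<sigma> \<gamma> \<theta> :: real
  assumes "\<sigma> > 0" "\<gamma> > 0" "\<theta> > 0"
  shows "logloss {0<..} (gengamma_shape_dens \<sigma> \<gamma> \<theta>) (gengamma_shape_dens \<sigma> \<gamma> 1)
    = ln (Gamma (\<theta> / \<gamma>)) - ln \<gamma> + \<theta> * ln \<sigma> + (1 - \<theta>) * (ln \<sigma> + Digamma (1 / \<gamma>) / \<gamma>)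
      + 1 / \<gamma>"
proof -
  let ?g = "gengamma_shape_dens \<sigma> \<gamma> 1"
  have "Gamma (1 / \<gamma>) \<noteq> 0" using assms by (simp add: Gamma_nonzero pos_notin_nonpos_Ints)
  have moment: "((\<lambda>x. ?g x * x powr s) has_abs_integral \<sigma> powr s * Gamma ((1 + s) / \<gamma>) / Gamma (1 / \<gamma>))
                  {0<..}" if "s > -1" for s
    using gengamma_scale_dens_moment[of 1 \<gamma> \<sigma> s] that assms by (simp add: gengamma_shape_dens_1_eq)
  have "logloss {0<..} (gengamma_shape_dens \<sigma> \<gamma> \<theta>) ?g
      = ln (Gamma (\<theta> / \<gamma>)) - ln \<gamma> + \<theta> * ln \<sigma> + (1 - \<theta>) * (ln \<sigma> + Digamma (1 / \<gamma>) / \<gamma>)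
        + 1 * (1 / \<gamma>)"
  proof (rule logloss_eq_affine[where u = ln and v = "\<lambda>x. (x / \<sigma>) powr \<gamma>"])
    show "continuous_on {0<..} ?g"
      using assms continuous_on_gengamma_scale_dens[of \<gamma> 1 \<sigma>] by (simp add: gengamma_shape_dens_1_eq)
    show "(?g has_abs_integral 1) {0<..}"
      using moment[of 0] assms \<open>Gamma (1 / \<gamma>) \<noteq> 0\<close> by (auto elim!: has_abs_integral_eq)
    show "((\<lambda>x. ?g x * ln x) has_abs_integral ln \<sigma> + Digamma (1 / \<gamma>) / \<gamma>) {0<..}"
      using assms(1,2) by (rule gengamma_shape_mean_ln)
    have "Gamma ((1 + \<gamma>) / \<gamma>) = 1 / \<gamma> * Gamma (1 / \<gamma>)"
      using Gamma_plus1[OF pos_notin_nonpos_Ints[of "1 / \<gamma>"]] assms by (simp add: add_divide_distrib)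
    moreover have "\<sigma> powr (- \<gamma>) * \<sigma> powr \<gamma> = 1"
      using assms by (simp add: powr_add[symmetric])
    ultimately have "\<sigma> powr (- \<gamma>) * (\<sigma> powr \<gamma> * Gamma ((1 + \<gamma>) / \<gamma>) / Gamma (1 / \<gamma>)) = 1 / \<gamma>"
      using \<open>Gamma (1 / \<gamma>) \<noteq> 0\<close> by (simp add: mult.assoc[symmetric])
    then have "((\<lambda>x. \<sigma> powr (- \<gamma>) * (?g x * x powr \<gamma>)) has_abs_integral 1 / \<gamma>) {0<..}"
      using has_abs_integral_cmult[OF moment[of \<gamma>], of "\<sigma> powr (- \<gamma>)"] assms by simp
    then show "((\<lambda>x. ?g x * (x / \<sigma>) powr \<gamma>) has_abs_integral 1 / \<gamma>) {0<..}"
      by (rule has_abs_integral_eq) (use assms in \<open>auto simp: powr_divide powr_minus field_simps\<close>)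
    show "- ln (gengamma_shape_dens \<sigma> \<gamma> \<theta> x)
        = ln (Gamma (\<theta> / \<gamma>)) - ln \<gamma> + \<theta> * ln \<sigma> + (1 - \<theta>) * ln x + 1 * (x / \<sigma>) powr \<gamma>"
      if "x \<in> {0<..}" for x
    proof -
      define G where "G = Gamma (\<theta> / \<gamma>)"
      have "G > 0" using assms by (simp add: G_def)
      with that have "ln (gengamma_shape_dens \<sigma> \<gamma> \<theta> x)
          = ln \<gamma> + (\<theta> - 1) * ln x - (x / \<sigma>) powr \<gamma> - ln G - \<theta> * ln \<sigma>"
        using assms unfolding gengamma_shape_dens_def G_def[symmetric] by (simp add: ln_mult ln_div ln_powr)
      then show ?thesis by (simp add: G_def algebra_simps)
    qed
  qed (use assms in \<open>auto intro!: continuous_intros\<close>)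
  then show ?thesis by simp
qed

lemma gengamma_shape_logloss_less:
  fixes \<sigma> \<gamma> \<theta> :: real
  assumes "\<sigma> > 0" "\<gamma> > 0" "\<theta> > 1"
  shows "logloss {0<..} (gengamma_shape_dens \<sigma> \<gamma> \<theta>) (gengamma_shape_dens \<sigma> \<gamma> 1)
       > logloss {0<..} (gengamma_shape_dens \<sigma> \<gamma> (1 / \<theta>)) (gengamma_shape_dens \<sigma> \<gamma> 1)"
proof -
  define a where "a = 1 / \<gamma>"
  have "a > 0" using assms by (simp add: a_def)
  have "ln (Gamma (\<theta> / \<gamma>)) = ln_Gamma (a * \<theta>)" "ln (Gamma (1 / \<theta> / \<gamma>)) = ln_Gamma (a / \<theta>)"
    using assms by (simp_all add: a_def ln_Gamma_real_pos mult.commute)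
  then show ?thesis
    using ln_Gamma_dilation_gt[OF \<open>a > 0\<close> assms(3)] assms
    by (simp add: gengamma_shape_logloss a_def algebra_simps diff_divide_distrib)
qed

section \<open>Normal, log-normal and Laplace scale families\<close>

lemma ln_add_half_inverse_square_less:
  fixes \<theta> :: real
  assumes "\<theta> > 1"
  shows "ln \<theta> + 1 / (2 * \<theta>\<^sup>2) < ln (1 / \<theta>) + 1 / (2 * (1 / \<theta>)\<^sup>2)"
proof -
  have "2 * ln (\<theta>\<^sup>2) < \<theta>\<^sup>2 - 1 / \<theta>\<^sup>2"
    using assms by (intro two_ln_less_diff_inverse) (simp add: one_less_power)
  moreover have "ln (\<theta>\<^sup>2) = 2 * ln \<theta>" "ln (1 / \<theta>) = - ln \<theta>"
    using assms by (simp_all add: ln_realpow ln_div)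
  ultimately show ?thesis using assms by (simp add: field_simps power2_eq_square)
qed

lemma normal_logloss:
  fixes \<theta> :: real
  assumes "\<theta> > 0"
  shows "logloss UNIV (normal_density 0 \<theta>) (normal_density 0 1)
           = ln (2 * pi) / 2 + ln \<theta> + 1 / (2 * \<theta>\<^sup>2)"
proof -
  have "logloss UNIV (normal_density 0 \<theta>) (normal_density 0 1)
      = ln (2 * pi) / 2 + ln \<theta> + 1 / (2 * \<theta>\<^sup>2) * 1 + 0 * 0"
  proof (rule logloss_eq_affine[where u = "\<lambda>x. x\<^sup>2" and v = "\<lambda>_. 0"])
    show "((\<lambda>x. normal_density 0 1 x * x\<^sup>2) has_abs_integral 1) UNIV"
      using has_abs_integral_normal_moments(3)[of 1 0] by simp
    have "ln (\<theta>\<^sup>2) = 2 * ln \<theta>" using assms by (simp add: ln_realpow)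
    then show "- ln (normal_density 0 \<theta> x) = ln (2 * pi) / 2 + ln \<theta> + 1 / (2 * \<theta>\<^sup>2) * x\<^sup>2 + 0 * 0"
      for x using assms by (simp add: normal_density_def ln_mult ln_div ln_sqrt field_simps)
  qed (auto simp: has_abs_integral_normal_moments has_abs_integral_0 normal_density_def
            intro!: continuous_intros)
  then show ?thesis by simp
qed

lemma normal_logloss_less:
  "\<theta> > 1 \<Longrightarrow> logloss UNIV (normal_density 0 \<theta>) (normal_density 0 1)
                  < logloss UNIV (normal_density 0 (1 / \<theta>)) (normal_density 0 1)"
  using ln_add_half_inverse_square_less[of \<theta>] by (simp add: normal_logloss)

lemma lognormal_transfer:
  fixes H :: "real \<Rightarrow> real"
  assumes "((\<lambda>u. normal_density \<mu> 1 u * H u) has_abs_integral I) UNIV"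
  shows "((\<lambda>x. lognormal_logscale_dens \<mu> 1 x * H (ln x)) has_abs_integral I) {0<..}"
proof -
  have "ln ` {0::real<..} = UNIV"
    by (auto intro!: image_eqI[where x = "exp _"])
  then have "((\<lambda>x. \<bar>1 / x\<bar> * (normal_density \<mu> 1 (ln x) * H (ln x))) has_abs_integral I) {0<..}"
    using assms by (intro has_abs_integral_change_of_variables)
                   (auto intro!: derivative_eq_intros simp: inj_on_def)
  then show ?thesis
    by (rule has_abs_integral_eq) (auto simp: lognormal_logscale_dens_def normal_density_def)
qed

lemma lognormal_logloss:
  fixes \<theta> \<mu> :: real
  assumes "\<theta> > 0"
  shows "logloss {0<..} (lognormal_logscale_dens \<mu> \<theta>) (lognormal_logscale_dens \<mu> 1)
           = ln \<theta> + ln (sqrt (2 * pi)) + 1 / (2 * \<theta>\<^sup>2) + \<mu>"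
proof -
  let ?g = "lognormal_logscale_dens \<mu> 1"
  have "logloss {0<..} (lognormal_logscale_dens \<mu> \<theta>) ?g
      = ln \<theta> + ln (sqrt (2 * pi)) + 1 / (2 * \<theta>\<^sup>2) * 1 + 1 * \<mu>"
  proof (rule logloss_eq_affine[where u = "\<lambda>x. (ln x - \<mu>)\<^sup>2" and v = ln])
    show "(?g has_abs_integral 1) {0<..}"
      using lognormal_transfer[of \<mu> "\<lambda>_. 1"] has_abs_integral_normal_moments(1)[of 1 \<mu>] by simp
    show "((\<lambda>x. ?g x * (ln x - \<mu>)\<^sup>2) has_abs_integral 1) {0<..}"
      using lognormal_transfer[of \<mu> "\<lambda>u. (u - \<mu>)\<^sup>2"] has_abs_integral_normal_moments(3)[of 1 \<mu>]
      by simp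
    show "((\<lambda>x. ?g x * ln x) has_abs_integral \<mu>) {0<..}"
      using lognormal_transfer[of \<mu> "\<lambda>u. u"] has_abs_integral_normal_moments(2)[of 1 \<mu>] by simp
    show "- ln (lognormal_logscale_dens \<mu> \<theta> x)
        = ln \<theta> + ln (sqrt (2 * pi)) + 1 / (2 * \<theta>\<^sup>2) * (ln x - \<mu>)\<^sup>2 + 1 * ln x"
      if "x \<in> {0<..}" for x
      using that assms by (simp add: lognormal_logscale_dens_def ln_div ln_mult)
  qed (use assms in \<open>auto simp: lognormal_logscale_dens_def intro!: continuous_intros\<close>)
  then show ?thesis by simp
qed

lemma lognormal_logloss_less:
  "\<theta> > 1 \<Longrightarrow> logloss {0<..} (lognormal_logscale_dens \<mu> \<theta>) (lognormal_logscale_dens \<mu> 1)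
                  < logloss {0<..} (lognormal_logscale_dens \<mu> (1 / \<theta>)) (lognormal_logscale_dens \<mu> 1)"
  using ln_add_half_inverse_square_less[of \<theta>] by (simp add: lognormal_logloss)

lemma laplace_logloss:
  fixes \<theta> :: real
  assumes "\<theta> > 0"
  shows "logloss UNIV (laplace_scale_dens \<theta>) (laplace_scale_dens 1) = ln (2 * \<theta>) + 1 / \<theta>"
proof -
  let ?g = "laplace_scale_dens 1"
  have "logloss UNIV (laplace_scale_dens \<theta>) ?g = ln (2 * \<theta>) + 1 / \<theta> * 1 + 0 * 0"
  proof (rule logloss_eq_affine[where u = abs and v = "\<lambda>_. 0"])
    have "((\<lambda>y. 1 / 2 * exp (- y)) has_abs_integral 1 / 2 * 1) {0<..}"
      by (intro has_abs_integral_cmult has_abs_integral_exp_moments)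
    then have "(?g has_abs_integral 1 / 2) {0<..}"
      by (rule has_abs_integral_eq) (auto simp: laplace_scale_dens_def)
    then have "(?g has_abs_integral 2 * (1 / 2)) UNIV"
      by (rule has_abs_integral_even[rotated]) (simp add: laplace_scale_dens_def)
    then show "(?g has_abs_integral 1) UNIV" by simp
    have "((\<lambda>y. 1 / 2 * (y * exp (- y))) has_abs_integral 1 / 2 * 1) {0<..}"
      by (intro has_abs_integral_cmult has_abs_integral_exp_moments)
    then have "((\<lambda>y. ?g y * \<bar>y\<bar>) has_abs_integral 1 / 2) {0<..}"
      by (rule has_abs_integral_eq) (auto simp: laplace_scale_dens_def)
    then have "((\<lambda>y. ?g y * \<bar>y\<bar>) has_abs_integral 2 * (1 / 2)) UNIV"
      by (rule has_abs_integral_even[rotated]) (simp add: laplace_scale_dens_def)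
    then show "((\<lambda>y. ?g y * \<bar>y\<bar>) has_abs_integral 1) UNIV" by simp
    show "- ln (laplace_scale_dens \<theta> y) = ln (2 * \<theta>) + 1 / \<theta> * \<bar>y\<bar> + 0 * 0" for y
      using assms by (simp add: laplace_scale_dens_def ln_div)
  qed (auto simp: laplace_scale_dens_def has_abs_integral_0 intro!: continuous_intros)
  then show ?thesis by simp
qed

lemma laplace_logloss_less:
  assumes "\<theta> > 1"
  shows "logloss UNIV (laplace_scale_dens \<theta>) (laplace_scale_dens 1)
           < logloss UNIV (laplace_scale_dens (1 / \<theta>)) (laplace_scale_dens 1)"
  using two_ln_less_diff_inverse[OF assms] assms by (simp add: laplace_logloss ln_mult ln_div)

section \<open>Inverse gamma scale and Pareto shape families\<close>

lemma invgamma_scale_dens_moment: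
  fixes k s :: real
  assumes "k > 0" "s < k"
  shows "((\<lambda>x. invgamma_scale_dens k 1 x * x powr s) has_abs_integral Gamma (k - s) / Gamma k) {0<..}"
proof -
  have "((\<lambda>x. 1 / Gamma k * (x powr (- (k - s) - 1) * exp (- 1 / x)))
          has_abs_integral 1 / Gamma k * Gamma (k - s)) {0<..}"
    using assms by (intro has_abs_integral_cmult has_abs_integral_inverse_Gamma) simp
  then show ?thesis
  proof (rule has_abs_integral_eq)
    fix x :: real assume "x \<in> {0<..}"
    have "- k - 1 + s = - (k - s) - 1" by simp
    then have "x powr (- k - 1) * x powr s = x powr (- (k - s) - 1)"
      by (simp only: powr_add[symmetric])
    then show "invgamma_scale_dens k 1 x * x powr s
        = 1 / Gamma k * (x powr (- (k - s) - 1) * exp (- 1 / x))"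
      by (simp add: invgamma_scale_dens_def field_simps)
  qed simp
qed

lemma invgamma_logloss:
  fixes k \<theta> :: real
  assumes "k > 0" "\<theta> > 0"
  shows "logloss {0<..} (invgamma_scale_dens k \<theta>) (invgamma_scale_dens k 1)
    = - k * ln \<theta> + ln (Gamma k) + \<theta> * k
      + (k + 1) * integral {0<..} (\<lambda>x. invgamma_scale_dens k 1 x * ln x)"
proof (rule logloss_eq_affine[where u = "\<lambda>x. 1 / x" and v = ln])
  let ?g = "invgamma_scale_dens k 1"
  have "Gamma k \<noteq> 0" using assms by (simp add: Gamma_nonzero pos_notin_nonpos_Ints)
  show g_cont: "continuous_on {0<..} ?g"
    unfolding invgamma_scale_dens_def using \<open>Gamma k \<noteq> 0\<close> by (intro continuous_intros) auto
  show "(?g has_abs_integral 1) {0<..}"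
    using invgamma_scale_dens_moment[of k 0] assms \<open>Gamma k \<noteq> 0\<close> by (auto elim!: has_abs_integral_eq)
  show "((\<lambda>x. ?g x * (1 / x)) has_abs_integral k) {0<..}"
    using invgamma_scale_dens_moment[of k "-1"] assms \<open>Gamma k \<noteq> 0\<close>
      Gamma_plus1[OF pos_notin_nonpos_Ints[of k]]
    by (auto simp: powr_minus_divide elim!: has_abs_integral_eq)
  have "(\<lambda>x. ?g x * ln x) absolutely_integrable_on {0<..}"
  proof (rule absolutely_integrable_mult_ln[where u = "\<lambda>x. x" and \<eta> = "k / 2", simplified])
    show "(\<lambda>x. ?g x * x powr (k / 2)) absolutely_integrable_on {0<..}"
         "(\<lambda>x. ?g x * x powr (- (k / 2))) absolutely_integrable_on {0<..}"
      using invgamma_scale_dens_moment[of k "k / 2"] invgamma_scale_dens_moment[of k "- (k / 2)"] assms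
      by (auto simp: has_abs_integral_def)
  qed (use assms g_cont in \<open>auto simp: invgamma_scale_dens_def\<close>)
  then show "((\<lambda>x. ?g x * ln x) has_abs_integral integral {0<..} (\<lambda>x. ?g x * ln x)) {0<..}"
    by (simp add: has_abs_integral_def)
  show "- ln (invgamma_scale_dens k \<theta> x) = - k * ln \<theta> + ln (Gamma k) + \<theta> * (1 / x) + (k + 1) * ln x"
    if "x \<in> {0<..}" for x
  proof -
    define G where "G = Gamma k"
    have "G > 0" using assms by (simp add: G_def)
    with that have "ln (invgamma_scale_dens k \<theta> x) = k * ln \<theta> - (k + 1) * ln x - \<theta> / x - ln G"
      using assms unfolding invgamma_scale_dens_def G_def[symmetric]
      by (simp add: ln_div ln_mult ln_powr algebra_simps)
    then show ?thesis by (simp add: G_def algebra_simps)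
  qed
qed (auto intro!: continuous_intros)

lemma invgamma_logloss_less:
  fixes k \<theta> :: real
  assumes "k > 0" "\<theta> > 1"
  shows "logloss {0<..} (invgamma_scale_dens k \<theta>) (invgamma_scale_dens k 1)
       > logloss {0<..} (invgamma_scale_dens k (1 / \<theta>)) (invgamma_scale_dens k 1)"
proof -
  have "0 < k * (\<theta> - 1 / \<theta> - 2 * ln \<theta>)"
    using two_ln_less_diff_inverse[OF assms(2)] assms by simp
  moreover have "ln (1 / \<theta>) = - ln \<theta>" using assms by (simp add: ln_div)
  ultimately show ?thesis
    using assms by (simp add: invgamma_logloss algebra_simps)
qed

lemma pareto_transfer:
  fixes H :: "real \<Rightarrow> real" and m :: real
  assumes "m > 0" "((\<lambda>u. exp (- u) * H u) has_abs_integral I) {0<..}"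
  shows "((\<lambda>x. pareto_shape_dens m 1 x * H (ln (x / m))) has_abs_integral I) {m..}"
proof -
  have "(\<lambda>x. ln (x / m)) ` {m<..} = {0<..}"
  proof (intro equalityI subsetI)
    fix y :: real assume "y \<in> {0<..}"
    then have "m * exp y > m * 1" using assms by (intro mult_strict_left_mono) auto
    then show "y \<in> (\<lambda>x. ln (x / m)) ` {m<..}"
      using assms by (intro image_eqI[of _ _ "m * exp y"]) auto
  qed (use assms in auto)
  moreover have "inj_on (\<lambda>x. ln (x / m)) {m<..}"
    using assms by (auto simp: inj_on_def)
  ultimately have "((\<lambda>x. \<bar>1 / x\<bar> * (exp (- ln (x / m)) * H (ln (x / m)))) has_abs_integral I) {m<..}"
    using assms
    by (intro has_abs_integral_change_of_variables) (auto intro!: derivative_eq_intros simp: field_simps)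
  then have "((\<lambda>x. pareto_shape_dens m 1 x * H (ln (x / m))) has_abs_integral I) {m<..}"
  proof (rule has_abs_integral_eq)
    fix x assume "x \<in> {m<..}"
    then have "x > 0" "x powr (- 1 - 1) = 1 / x\<^sup>2"
      using assms by (simp_all add: powr_minus_divide powr_realpow)
    then show "pareto_shape_dens m 1 x * H (ln (x / m)) = \<bar>1 / x\<bar> * (exp (- ln (x / m)) * H (ln (x / m)))"
      using assms by (simp add: pareto_shape_dens_def exp_minus power2_eq_square)
  qed simp
  moreover have "negligible ({m<..} - {m..})" "negligible ({m..} - {m<..})"
    by (rule negligible_subset[of "{m}"]; auto)+
  ultimately show ?thesis
    using has_abs_integral_spike_set by blast
qed

lemma pareto_logloss:
  fixes m \<theta> :: real
  assumes "m > 0" "\<theta> > 0"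
  shows "logloss {m..} (pareto_shape_dens m \<theta>) (pareto_shape_dens m 1)
           = - ln \<theta> - \<theta> * ln m + (\<theta> + 1) * (1 + ln m)"
proof -
  let ?g = "pareto_shape_dens m 1"
  have "logloss {m..} (pareto_shape_dens m \<theta>) ?g = - ln \<theta> - \<theta> * ln m + (\<theta> + 1) * (1 + ln m) + 0 * 0"
  proof (rule logloss_eq_affine[where u = ln and v = "\<lambda>_. 0"])
    show "(?g has_abs_integral 1) {m..}"
      using pareto_transfer[OF assms(1), of "\<lambda>_. 1"] has_abs_integral_exp_moments(1) by simp
    have "((\<lambda>u. exp (- u) * (u + ln m)) has_abs_integral 1 + ln m * 1) {0<..}"
      using has_abs_integral_add[OF has_abs_integral_exp_moments(2)
                                     has_abs_integral_cmult[OF has_abs_integral_exp_moments(1)]]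
      by (rule has_abs_integral_eq) (auto simp: algebra_simps)
    then have "((\<lambda>x. ?g x * (ln (x / m) + ln m)) has_abs_integral 1 + ln m * 1) {m..}"
      by (rule pareto_transfer[OF assms(1)])
    then show "((\<lambda>x. ?g x * ln x) has_abs_integral 1 + ln m) {m..}"
      by (rule has_abs_integral_eq) (use assms in \<open>auto simp: ln_div\<close>)
    show "- ln (pareto_shape_dens m \<theta> x) = - ln \<theta> - \<theta> * ln m + (\<theta> + 1) * ln x + 0 * 0"
      if "x \<in> {m..}" for x
      using that assms by (simp add: pareto_shape_dens_def ln_mult ln_powr algebra_simps)
  qed (use assms in \<open>auto simp: pareto_shape_dens_def has_abs_integral_0 intro!: continuous_intros\<close>)
  then show ?thesis by simp
qed

lemma pareto_logloss_less:
  fixes m \<theta> :: real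
  assumes "m > 0" "\<theta> > 1"
  shows "logloss {m..} (pareto_shape_dens m \<theta>) (pareto_shape_dens m 1)
       > logloss {m..} (pareto_shape_dens m (1 / \<theta>)) (pareto_shape_dens m 1)"
proof -
  have "ln (1 / \<theta>) = - ln \<theta>" using assms by (simp add: ln_div)
  then show ?thesis
    using two_ln_less_diff_inverse[OF assms(2)] assms by (simp add: pareto_logloss algebra_simps)
qed

section \<open>Beta shape family\<close>

lemma continuous_on_beta_shape_dens:
  assumes "\<beta> > 0" "\<theta> > 0"
  shows "continuous_on {0<..<1} (beta_shape_dens \<beta> \<theta>)"
proof -
  have "Gamma \<theta> * Gamma \<beta> \<noteq> 0" using assms by (simp add: Gamma_nonzero pos_notin_nonpos_Ints)
  then show ?thesis
    unfolding beta_shape_dens_def by (intro continuous_intros) auto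
qed

lemma beta_shape_dens_nonneg: "\<beta> > 0 \<Longrightarrow> \<theta> > 0 \<Longrightarrow> beta_shape_dens \<beta> \<theta> x \<ge> 0"
  by (simp add: beta_shape_dens_def)

lemma beta_shape_dens_moment:
  fixes \<beta> \<theta> a b :: real
  assumes "\<beta> > 0" "\<theta> > 0" "a > - \<theta>" "b > - \<beta>"
  shows "((\<lambda>x. beta_shape_dens \<beta> \<theta> x * (x powr a * (1 - x) powr b))
           has_abs_integral Beta (\<theta> + a) (\<beta> + b) / Beta \<theta> \<beta>) {0<..<1}"
proof -
  have "((\<lambda>x. 1 / Beta \<theta> \<beta> * (x powr (\<theta> + a - 1) * (1 - x) powr (\<beta> + b - 1)))
          has_abs_integral 1 / Beta \<theta> \<beta> * Beta (\<theta> + a) (\<beta> + b)) {0<..<1}"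
    using assms by (intro has_abs_integral_cmult has_abs_integral_Beta) auto
  then show ?thesis
  proof (rule has_abs_integral_eq)
    fix x :: real assume "x \<in> {0<..<1}"
    have "x powr (\<theta> + a - 1) = x powr ((\<theta> - 1) + a)"
         "(1 - x) powr (\<beta> + b - 1) = (1 - x) powr ((\<beta> - 1) + b)"
      by (simp_all add: algebra_simps)
    then have "x powr (\<theta> + a - 1) = x powr (\<theta> - 1) * x powr a"
         "(1 - x) powr (\<beta> + b - 1) = (1 - x) powr (\<beta> - 1) * (1 - x) powr b"
      by (simp_all add: powr_add)
    then show "beta_shape_dens \<beta> \<theta> x * (x powr a * (1 - x) powr b)
        = 1 / Beta \<theta> \<beta> * (x powr (\<theta> + a - 1) * (1 - x) powr (\<beta> + b - 1))"
      by (simp add: beta_shape_dens_def Beta_def)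
  qed simp
qed

lemma beta_mean_ln:
  fixes \<beta> :: real
  assumes "\<beta> > 0"
  shows "((\<lambda>x. beta_shape_dens \<beta> 1 x * ln x) has_abs_integral Digamma 1 - Digamma (1 + \<beta>)) {0<..<1}"
proof (rule has_abs_integral_mult_ln_Mellin)
  define F where "F h = Beta (1 + h) \<beta> / Beta 1 \<beta>" for h
  show "((\<lambda>x. beta_shape_dens \<beta> 1 x * x powr h) has_abs_integral F h) {0<..<1}"
    if "\<bar>h\<bar> \<le> 1 / 2" for h
  proof -
    have "h > -1" using that by simp
    then have "((\<lambda>x. beta_shape_dens \<beta> 1 x * (x powr h * (1 - x) powr 0))
                 has_abs_integral Beta (1 + h) (\<beta> + 0) / Beta 1 \<beta>) {0<..<1}"
      using assms by (intro beta_shape_dens_moment) auto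
    then show ?thesis by (rule has_abs_integral_eq) (auto simp: F_def)
  qed
  have "Gamma \<beta> \<noteq> 0" "Gamma (1 + \<beta>) \<noteq> 0"
    using assms by (simp_all add: Gamma_nonzero pos_notin_nonpos_Ints)
  moreover have "1 + 0 + \<beta> \<notin> \<int>\<^sub>\<le>\<^sub>0" using assms by (simp add: pos_notin_nonpos_Ints)
  ultimately show "(F has_real_derivative Digamma 1 - Digamma (1 + \<beta>)) (at 0)"
    unfolding F_def Beta_def
    by (auto intro!: derivative_eq_intros DERIV_chain2[OF has_field_derivative_Gamma]
             simp: field_simps power2_eq_square add_ac)
qed (use assms continuous_on_beta_shape_dens beta_shape_dens_nonneg in auto)

lemma beta_logloss:
  fixes \<beta> \<theta> :: real
  assumes "\<beta> > 0" "\<theta> > 0"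
  shows "logloss {0<..<1} (beta_shape_dens \<beta> \<theta>) (beta_shape_dens \<beta> 1)
    = ln (Gamma \<theta>) + ln (Gamma \<beta>) - ln (Gamma (\<theta> + \<beta>)) + (1 - \<theta>) * (Digamma 1 - Digamma (1 + \<beta>))
      + (1 - \<beta>) * integral {0<..<1} (\<lambda>x. beta_shape_dens \<beta> 1 x * ln (1 - x))"
proof (rule logloss_eq_affine[where u = ln and v = "\<lambda>x. ln (1 - x)"])
  let ?g = "beta_shape_dens \<beta> 1"
  have moment: "((\<lambda>x. ?g x * (1 - x) powr b) has_abs_integral Beta 1 (\<beta> + b) / Beta 1 \<beta>) {0<..<1}"
    if "b > - \<beta>" for b
  proof -
    have "((\<lambda>x. ?g x * (x powr 0 * (1 - x) powr b)) has_abs_integral Beta (1 + 0) (\<beta> + b) / Beta 1 \<beta>)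
            {0<..<1}"
      using assms that by (intro beta_shape_dens_moment) auto
    then show ?thesis by (rule has_abs_integral_eq) auto
  qed
  have "Beta 1 \<beta> \<noteq> 0"
    using assms by (simp add: Beta_def Gamma_nonzero pos_notin_nonpos_Ints add_pos_pos)
  then show "(?g has_abs_integral 1) {0<..<1}"
    using moment[of 0] assms by (auto elim!: has_abs_integral_eq)
  show "((\<lambda>x. ?g x * ln x) has_abs_integral Digamma 1 - Digamma (1 + \<beta>)) {0<..<1}"
    using assms(1) by (rule beta_mean_ln)
  have "(\<lambda>x. ?g x * ln (1 - x)) absolutely_integrable_on {0<..<1}"
  proof (rule absolutely_integrable_mult_ln[where \<eta> = "\<beta> / 2"])
    show "(\<lambda>x. ?g x * (1 - x) powr (\<beta> / 2)) absolutely_integrable_on {0<..<1}"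
         "(\<lambda>x. ?g x * (1 - x) powr (- (\<beta> / 2))) absolutely_integrable_on {0<..<1}"
      using moment[of "\<beta> / 2"] moment[of "- (\<beta> / 2)"] assms by (auto simp: has_abs_integral_def)
  qed (use assms continuous_on_beta_shape_dens beta_shape_dens_nonneg in \<open>auto intro!: continuous_intros\<close>)
  then show "((\<lambda>x. ?g x * ln (1 - x)) has_abs_integral integral {0<..<1} (\<lambda>x. ?g x * ln (1 - x))) {0<..<1}"
    by (simp add: has_abs_integral_def)
  show "- ln (beta_shape_dens \<beta> \<theta> x)
      = ln (Gamma \<theta>) + ln (Gamma \<beta>) - ln (Gamma (\<theta> + \<beta>)) + (1 - \<theta>) * ln x + (1 - \<beta>) * ln (1 - x)"
    if "x \<in> {0<..<1}" for x
  proof -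
    have "Gamma \<theta> > 0" "Gamma \<beta> > 0" "Gamma (\<theta> + \<beta>) > 0" using assms by simp_all
    with that show ?thesis
      unfolding beta_shape_dens_def by (simp add: ln_mult ln_div ln_powr algebra_simps)
  qed
qed (use assms continuous_on_beta_shape_dens in \<open>auto intro!: continuous_intros\<close>)

lemma beta_logloss_less:
  fixes \<beta> \<theta> :: real
  assumes "\<beta> > 0" "\<theta> > 1"
  shows "logloss {0<..<1} (beta_shape_dens \<beta> \<theta>) (beta_shape_dens \<beta> 1)
       > logloss {0<..<1} (beta_shape_dens \<beta> (1 / \<theta>)) (beta_shape_dens \<beta> 1)"
proof -
  have "\<theta> > 0" "1 / \<theta> > 0" "\<theta> + \<beta> > 0" "1 / \<theta> + \<beta> > 0"
    using assms by (auto intro: add_pos_pos)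
  then have "ln (Gamma \<theta>) = ln_Gamma \<theta>" "ln (Gamma (1 / \<theta>)) = ln_Gamma (1 / \<theta>)"
            "ln (Gamma (\<theta> + \<beta>)) = ln_Gamma (\<theta> + \<beta>)"
            "ln (Gamma (1 / \<theta> + \<beta>)) = ln_Gamma (1 / \<theta> + \<beta>)"
    by (simp_all add: ln_Gamma_real_pos)
  then show ?thesis
    using ln_Gamma_beta_dilation_gt[OF assms] assms \<open>\<theta> > 0\<close> \<open>1 / \<theta> > 0\<close>
    by (simp add: beta_logloss algebra_simps)
qed

section \<open>Inverse Gaussian shape family\<close>

definition invgauss_signed_root :: "real \<Rightarrow> real \<Rightarrow> real" where
  "invgauss_signed_root \<mu> x = (x - \<mu>) / (\<mu> * sqrt x)"

lemma invgauss_signed_root_sq: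
  "\<mu> > 0 \<Longrightarrow> x > 0 \<Longrightarrow> (invgauss_signed_root \<mu> x)\<^sup>2 = (x - \<mu>)\<^sup>2 / (\<mu>\<^sup>2 * x)"
  by (simp add: invgauss_signed_root_def power_divide power_mult_distrib)

lemma invgauss_signed_root_inversion:
  assumes "\<mu> > 0" "x > 0"
  shows "invgauss_signed_root \<mu> (\<mu>\<^sup>2 / x) = - invgauss_signed_root \<mu> x"
proof -
  have sq: "sqrt (\<mu>\<^sup>2 / x) = \<mu> / sqrt x" using assms by (simp add: real_sqrt_divide)
  have "sqrt x > 0" using assms by simp
  then show ?thesis
    unfolding invgauss_signed_root_def sq using assms by (simp add: field_simps power2_eq_square)
qed

lemma has_field_derivative_invgauss_signed_root:
  assumes "\<mu> > 0" "x > 0"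
  shows "(invgauss_signed_root \<mu> has_field_derivative (x + \<mu>) / (2 * \<mu> * x * sqrt x)) (at x within S)"
proof -
  have "sqrt x * sqrt x = x" using assms by simp
  then show ?thesis
    unfolding invgauss_signed_root_def using assms
    by (auto intro!: derivative_eq_intros simp: field_simps)
qed

lemma strict_mono_on_invgauss_signed_root:
  assumes "\<mu> > 0"
  shows "strict_mono_on {0<..} (invgauss_signed_root \<mu>)"
proof (rule strict_mono_onI)
  fix x y :: real assume "x \<in> {0<..}" "y \<in> {0<..}" "x < y"
  then have "sqrt x < sqrt y" "0 < sqrt x" by auto
  moreover have "invgauss_signed_root \<mu> z = sqrt z / \<mu> - 1 / sqrt z" if "z > 0" for z
    using that assms by (simp add: invgauss_signed_root_def field_simps)
  ultimately show "invgauss_signed_root \<mu> x < invgauss_signed_root \<mu> y"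
    using \<open>x \<in> _\<close> \<open>y \<in> _\<close> assms
    by (simp add: divide_strict_right_mono frac_less2 diff_strict_mono)
qed

lemma invgauss_signed_root_image:
  assumes "\<mu> > 0"
  shows "invgauss_signed_root \<mu> ` {0<..} = UNIV"
proof (intro equalityI subsetI)
  fix y :: real
  \<comment> \<open>sqrt x = s is the positive root of s^2 - \<mu> y s - \<mu> = 0\<close>
  define r where "r = sqrt ((\<mu> * y)\<^sup>2 + 4 * \<mu>)"
  define s where "s = (\<mu> * y + r) / 2"
  have "r > \<bar>\<mu> * y\<bar>"
    unfolding r_def using assms by (intro real_less_rsqrt) (simp add: power2_abs)
  then have "s > 0" by (simp add: s_def abs_less_iff)
  have "r\<^sup>2 = (\<mu> * y)\<^sup>2 + 4 * \<mu>" unfolding r_def using assms by simp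
  then have "s * s - \<mu> * y * s - \<mu> = 0"
    unfolding s_def by (simp add: algebra_simps power2_eq_square)
  moreover have "invgauss_signed_root \<mu> (s\<^sup>2) = (s * s - \<mu>) / (\<mu> * s)"
    using \<open>s > 0\<close> by (simp add: invgauss_signed_root_def power2_eq_square)
  ultimately have "invgauss_signed_root \<mu> (s\<^sup>2) = y"
    using \<open>s > 0\<close> assms by (simp add: field_simps)
  then show "y \<in> invgauss_signed_root \<mu> ` {0<..}"
    using \<open>s > 0\<close> by (intro image_eqI[of _ _ "s\<^sup>2"]) auto
qed auto

lemma invgauss_shape_dens_1_eq:
  assumes "\<mu> > 0" "x > 0"
  shows "invgauss_shape_dens \<mu> 1 x = normal_density 0 1 (invgauss_signed_root \<mu> x) / (x * sqrt x)"
proof -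
  have "x ^ 3 = x\<^sup>2 * x" by (simp add: power2_eq_square power3_eq_cube)
  then have "sqrt (1 / (2 * pi * x ^ 3)) = 1 / (sqrt (2 * pi) * (x * sqrt x))"
    using assms by (simp add: real_sqrt_divide real_sqrt_mult)
  then show ?thesis
    using invgauss_signed_root_sq[OF assms]
    by (simp add: invgauss_shape_dens_def normal_density_def)
qed

lemma continuous_on_invgauss_shape_dens:
  "\<mu> > 0 \<Longrightarrow> \<theta> > 0 \<Longrightarrow> continuous_on {0<..} (invgauss_shape_dens \<mu> \<theta>)"
  unfolding invgauss_shape_dens_def by (intro continuous_intros) auto

lemma invgauss_shape_dens_1_inversion:
  assumes "\<mu> > 0" "x > 0"
  shows "\<mu>\<^sup>2 / x\<^sup>2 * invgauss_shape_dens \<mu> 1 (\<mu>\<^sup>2 / x) = x / \<mu> * invgauss_shape_dens \<mu> 1 x"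
proof -
  have "sqrt (\<mu>\<^sup>2 / x) = \<mu> / sqrt x" "sqrt x > 0" using assms by (simp_all add: real_sqrt_divide)
  moreover have "normal_density 0 1 (- y) = normal_density 0 1 y" for y
    by (simp add: normal_density_def)
  ultimately have "invgauss_shape_dens \<mu> 1 (\<mu>\<^sup>2 / x)
      = normal_density 0 1 (invgauss_signed_root \<mu> x) / (\<mu>\<^sup>2 / x * (\<mu> / sqrt x))"
    using assms invgauss_shape_dens_1_eq[of \<mu> "\<mu>\<^sup>2 / x"] invgauss_signed_root_inversion[OF assms]
    by simp
  with assms \<open>sqrt x > 0\<close> show ?thesis
    by (simp add: invgauss_shape_dens_1_eq field_simps power2_eq_square)
qed

lemma invgauss_substitution:
  fixes K :: "real \<Rightarrow> real"
  assumes "\<mu> > 0" "((\<lambda>y. normal_density 0 1 y * K y) has_abs_integral I) UNIV"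
  shows "((\<lambda>x. (x + \<mu>) / (2 * \<mu>) * (invgauss_shape_dens \<mu> 1 x * K (invgauss_signed_root \<mu> x)))
           has_abs_integral I) {0<..}"
proof -
  let ?\<phi> = "invgauss_signed_root \<mu>"
  have "((\<lambda>x. \<bar>(x + \<mu>) / (2 * \<mu> * x * sqrt x)\<bar> * (normal_density 0 1 (?\<phi> x) * K (?\<phi> x)))
          has_abs_integral I) {0<..}"
    using assms invgauss_signed_root_image[OF assms(1)]
      strict_mono_on_imp_inj_on[OF strict_mono_on_invgauss_signed_root[OF assms(1)]]
    by (intro has_abs_integral_change_of_variables has_field_derivative_invgauss_signed_root) auto
  then show ?thesis
  proof (rule has_abs_integral_eq)
    fix x :: real assume "x \<in> {0<..}"
    then have "sqrt x > 0" and g: "invgauss_shape_dens \<mu> 1 x = normal_density 0 1 (?\<phi> x) / (x * sqrt x)"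
      using assms by (simp_all add: invgauss_shape_dens_1_eq)
    with \<open>x \<in> _\<close> show "(x + \<mu>) / (2 * \<mu>) * (invgauss_shape_dens \<mu> 1 x * K (?\<phi> x))
        = \<bar>(x + \<mu>) / (2 * \<mu> * x * sqrt x)\<bar> * (normal_density 0 1 (?\<phi> x) * K (?\<phi> x))"
      unfolding g using assms by (simp add: field_simps)
  qed simp
qed

text \<open>The inversion x \<mapsto> \<mu>^2 / x preserves the square of invgauss_signed_root and turns the
  weight x / \<mu> into 1, so in invgauss_substitution the two halves of
  (x + \<mu>) / (2 \<mu>) = 1 / 2 + x / (2 \<mu>) contribute equally.\<close>

lemma invgauss_transfer:
  fixes H :: "real \<Rightarrow> real"
  assumes "\<mu> > 0" "continuous_on UNIV H" "\<And>s. s \<ge> 0 \<Longrightarrow> H s \<ge> 0"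
    and normal: "((\<lambda>y. normal_density 0 1 y * H (y\<^sup>2)) has_abs_integral I) UNIV"
  shows "((\<lambda>x. invgauss_shape_dens \<mu> 1 x * H ((x - \<mu>)\<^sup>2 / (\<mu>\<^sup>2 * x))) has_abs_integral I) {0<..}"
proof -
  let ?\<phi> = "invgauss_signed_root \<mu>"
  define Q where "Q x = invgauss_shape_dens \<mu> 1 x * H ((?\<phi> x)\<^sup>2)" for x
  from invgauss_substitution[OF assms(1) normal]
  have P: "((\<lambda>x. 1 / 2 * Q x + 1 / 2 * (x / \<mu> * Q x)) has_abs_integral I) {0<..}"
    by (elim has_abs_integral_eq) (use assms in \<open>auto simp: Q_def field_simps\<close>)
  have "Q absolutely_integrable_on {0<..}"
  proof (rule absolutely_integrable_dominated)
    show "continuous_on {0<..} Q"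
      unfolding Q_def invgauss_signed_root_def using assms continuous_on_invgauss_shape_dens[of \<mu> 1]
      by (intro continuous_intros continuous_on_compose2[OF assms(2)]) auto
    show "(\<lambda>x. 2 * (1 / 2 * Q x + 1 / 2 * (x / \<mu> * Q x))) integrable_on {0<..}"
      using has_abs_integral_cmult[OF P] by (rule has_abs_integral_integrable_on)
    show "\<bar>Q x\<bar> \<le> 2 * (1 / 2 * Q x + 1 / 2 * (x / \<mu> * Q x))" if "x \<in> {0<..}" for x
      using that assms by (simp add: Q_def invgauss_shape_dens_def)
  qed simp
  then have Q: "(Q has_abs_integral integral {0<..} Q) {0<..}"
    by (simp add: has_abs_integral_def)
  from has_abs_integral_inversion[OF _ this, of "\<mu>\<^sup>2"]
  have "((\<lambda>x. x / \<mu> * Q x) has_abs_integral integral {0<..} Q) {0<..}"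
  proof (rule has_abs_integral_eq)
    fix x :: real assume "x \<in> {0<..}"
    then have "x > 0" by simp
    then have sq: "(?\<phi> (\<mu>\<^sup>2 / x))\<^sup>2 = (?\<phi> x)\<^sup>2"
      using assms by (simp add: invgauss_signed_root_inversion)
    show "x / \<mu> * Q x = \<mu>\<^sup>2 / x\<^sup>2 * Q (\<mu>\<^sup>2 / x)"
      by (simp only: Q_def sq mult.assoc[symmetric] invgauss_shape_dens_1_inversion[OF assms(1) \<open>x > 0\<close>])
  qed (use assms in simp_all)
  from has_abs_integral_add[OF has_abs_integral_cmult[OF Q] has_abs_integral_cmult[OF this], of "1 / 2" "1 / 2"]
  have "((\<lambda>x. 1 / 2 * Q x + 1 / 2 * (x / \<mu> * Q x)) has_abs_integral integral {0<..} Q) {0<..}"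
    by simp
  with P have "I = integral {0<..} Q" by (simp add: has_abs_integral_def)
  with Q show ?thesis
    by (elim has_abs_integral_eq) (use assms in \<open>auto simp: Q_def invgauss_signed_root_sq\<close>)
qed

lemma absolutely_integrable_invgauss_mult_ln:
  fixes \<mu> :: real
  assumes "\<mu> > 0"
  shows "(\<lambda>x. invgauss_shape_dens \<mu> 1 x * ln x) absolutely_integrable_on {0<..}"
proof -
  let ?g = "invgauss_shape_dens \<mu> 1" and ?T = "\<lambda>x. (x - \<mu>)\<^sup>2 / (\<mu>\<^sup>2 * x)"
  define C where "C = max (\<mu>\<^sup>2) 1"
  have "C \<ge> \<mu>\<^sup>2" "C \<ge> 1" by (auto simp: C_def)
  note normal = has_abs_integral_normal_moments[of 1 0, simplified]
  show ?thesis
  proof (rule absolutely_integrable_dominated)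
    have "((\<lambda>y. normal_density 0 1 y * (C * (y\<^sup>2 + 2 / \<mu>))) has_abs_integral C * 1 + C * (2 / \<mu>) * 1)
            UNIV"
      using has_abs_integral_add[OF has_abs_integral_cmult[OF normal(3), of C]
                                     has_abs_integral_cmult[OF normal(1), of "C * (2 / \<mu>)"]]
      by (rule has_abs_integral_eq) (auto simp: algebra_simps)
    then have "((\<lambda>x. ?g x * (C * (?T x + 2 / \<mu>))) has_abs_integral C * 1 + C * (2 / \<mu>) * 1) {0<..}"
      using assms \<open>C \<ge> 1\<close> by (intro invgauss_transfer[where H = "\<lambda>s. C * (s + 2 / \<mu>)"])
                                    (auto intro!: continuous_intros)
    then show "(\<lambda>x. ?g x * (C * (?T x + 2 / \<mu>))) integrable_on {0<..}"
      by (rule has_abs_integral_integrable_on)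
    show "\<bar>?g x * ln x\<bar> \<le> ?g x * (C * (?T x + 2 / \<mu>))" if "x \<in> {0<..}" for x
    proof -
      have "\<bar>ln x\<bar> \<le> x powr 1 + x powr (- 1)" using that abs_ln_le_powr[of x 1] by simp
      also have "\<dots> \<le> C * (x / \<mu>\<^sup>2) + C * (1 / x)"
        using that assms \<open>C \<ge> \<mu>\<^sup>2\<close> \<open>C \<ge> 1\<close>
        by (intro add_mono) (simp_all add: powr_minus_divide field_simps)
      also have "\<dots> = C * (?T x + 2 / \<mu>)"
        using that assms by (simp add: field_simps power2_eq_square)
      finally show ?thesis
        using that assms by (simp add: abs_mult invgauss_shape_dens_def mult_left_mono)
    qed
  qed (use assms in \<open>auto simp: invgauss_shape_dens_def intro!: continuous_intros\<close>)
qed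

lemma invgauss_logloss:
  fixes \<mu> \<theta> :: real
  assumes "\<mu> > 0" "\<theta> > 0"
  shows "logloss {0<..} (invgauss_shape_dens \<mu> \<theta>) (invgauss_shape_dens \<mu> 1)
    = (ln (2 * pi) - ln \<theta>) / 2 + \<theta> / 2
      + 3 / 2 * integral {0<..} (\<lambda>x. invgauss_shape_dens \<mu> 1 x * ln x)"
proof -
  let ?g = "invgauss_shape_dens \<mu> 1" and ?T = "\<lambda>x. (x - \<mu>)\<^sup>2 / (\<mu>\<^sup>2 * x)"
  note normal = has_abs_integral_normal_moments[of 1 0, simplified]
  have "logloss {0<..} (invgauss_shape_dens \<mu> \<theta>) ?g
      = (ln (2 * pi) - ln \<theta>) / 2 + \<theta> / 2 * 1 + 3 / 2 * integral {0<..} (\<lambda>x. ?g x * ln x)"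
  proof (rule logloss_eq_affine[where u = ?T and v = ln])
    show "continuous_on {0<..} ?g"
      using assms by (intro continuous_on_invgauss_shape_dens) simp_all
    show "(?g has_abs_integral 1) {0<..}"
      using assms normal invgauss_transfer[where H = "\<lambda>_. 1"] by simp
    show "((\<lambda>x. ?g x * ?T x) has_abs_integral 1) {0<..}"
      using assms normal by (intro invgauss_transfer[where H = "\<lambda>s. s"]) auto
    have "(\<lambda>x. ?g x * ln x) absolutely_integrable_on {0<..}"
      using assms(1) by (rule absolutely_integrable_invgauss_mult_ln)
    then show "((\<lambda>x. ?g x * ln x) has_abs_integral integral {0<..} (\<lambda>x. ?g x * ln x)) {0<..}"
      by (simp add: has_abs_integral_def)
    show "- ln (invgauss_shape_dens \<mu> \<theta> x) = (ln (2 * pi) - ln \<theta>) / 2 + \<theta> / 2 * ?T x + 3 / 2 * ln x"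
      if "x \<in> {0<..}" for x
      using that assms
      by (simp add: invgauss_shape_dens_def ln_mult ln_div ln_sqrt ln_realpow field_simps)
  qed (use assms in \<open>auto intro!: continuous_intros\<close>)
  then show ?thesis by simp
qed

lemma invgauss_logloss_less:
  fixes \<mu> \<theta> :: real
  assumes "\<mu> > 0" "\<theta> > 1"
  shows "logloss {0<..} (invgauss_shape_dens \<mu> \<theta>) (invgauss_shape_dens \<mu> 1)
       > logloss {0<..} (invgauss_shape_dens \<mu> (1 / \<theta>)) (invgauss_shape_dens \<mu> 1)"
proof -
  have "ln (1 / \<theta>) = - ln \<theta>" using assms by (simp add: ln_div)
  then show ?thesis
    using two_ln_less_diff_inverse[OF assms(2)] assms by (simp add: invgauss_logloss field_simps)
qed

section \<open>Poisson rate family\<close>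

lemma poisson_rate_pmf_1_moments:
  "poisson_rate_pmf 1 sums 1" "(\<lambda>k. real k * poisson_rate_pmf 1 k) sums 1"
proof -
  have "(\<lambda>k. 1 / fact k) sums (exp 1 :: real)"
    using exp_converges[of "1 :: real"] by (simp add: divide_inverse)
  from sums_mult[OF this, of "exp (-1)"]
  have "(\<lambda>k. exp (-1) * (1 / fact k)) sums (1 :: real)" by (simp add: exp_minus)
  moreover have "poisson_rate_pmf 1 = (\<lambda>k. exp (-1) * (1 / fact k))"
    by (simp add: fun_eq_iff poisson_rate_pmf_def)
  ultimately show "poisson_rate_pmf 1 sums 1" by simp
  moreover have "real (Suc k) * poisson_rate_pmf 1 (Suc k) = poisson_rate_pmf 1 k" for k
    by (simp add: poisson_rate_pmf_def del: of_nat_Suc)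
  ultimately have "(\<lambda>k. real (Suc k) * poisson_rate_pmf 1 (Suc k)) sums 1" by simp
  then show "(\<lambda>k. real k * poisson_rate_pmf 1 k) sums 1"
    by (subst (asm) sums_Suc_iff) simp
qed

lemma ln_fact_le_four_power: "ln (fact k :: real) \<le> 4 ^ k"
proof (cases "k = 0")
  case False
  have "ln (fact k :: real) \<le> ln (real k ^ k)"
    using False fact_le_power[of k, where 'a = real] by (subst ln_le_cancel_iff) auto
  also have "\<dots> = k * ln (real k)" using False by (simp add: ln_realpow)
  also have "\<dots> \<le> real k * real k"
    using ln_le_minus_one[of "real k"] False by (intro mult_left_mono) auto
  also have "\<dots> \<le> 2 ^ k * 2 ^ k"
    using less_exp[of k] by (intro mult_mono) (auto simp flip: of_nat_less_iff)
  also have "\<dots> = 4 ^ k" by (simp flip: power_mult_distrib)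
  finally show ?thesis .
qed simp

lemma summable_poisson_rate_pmf_1_ln_fact:
  "summable (\<lambda>k. poisson_rate_pmf 1 k * ln (fact k))"
proof (rule summable_comparison_test'[where g = "\<lambda>k. exp (-1) * ((4::real) ^ k /\<^sub>R fact k)"])
  show "summable (\<lambda>k. exp (-1) * ((4::real) ^ k /\<^sub>R fact k))"
    by (intro summable_mult summable_exp_generic)
  show "norm (poisson_rate_pmf 1 k * ln (fact k)) \<le> exp (-1) * ((4::real) ^ k /\<^sub>R fact k)" for k
    using ln_fact_le_four_power[of k] ln_ge_zero[of "fact k :: real"]
    by (simp add: poisson_rate_pmf_def divide_simps abs_mult)
qed

lemma poisson_logloss:
  fixes \<theta> :: real
  assumes "\<theta> > 0"
  shows "logloss_discrete (poisson_rate_pmf \<theta>) (poisson_rate_pmf 1)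
           = \<theta> - ln \<theta> + (\<Sum>k. poisson_rate_pmf 1 k * ln (fact k))"
proof -
  have "poisson_rate_pmf 1 k * - ln (poisson_rate_pmf \<theta> k)
      = \<theta> * poisson_rate_pmf 1 k - ln \<theta> * (real k * poisson_rate_pmf 1 k)
        + poisson_rate_pmf 1 k * ln (fact k)" for k
    using assms
    by (simp add: poisson_rate_pmf_def ln_div ln_mult ln_realpow algebra_simps add_divide_distrib)
  moreover have "(\<lambda>k. \<theta> * poisson_rate_pmf 1 k - ln \<theta> * (real k * poisson_rate_pmf 1 k)
                     + poisson_rate_pmf 1 k * ln (fact k))
      sums (\<theta> * 1 - ln \<theta> * 1 + (\<Sum>k. poisson_rate_pmf 1 k * ln (fact k)))"
    by (intro sums_add sums_diff sums_mult poisson_rate_pmf_1_moments summable_sums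
              summable_poisson_rate_pmf_1_ln_fact)
  ultimately show ?thesis
    unfolding logloss_discrete_def by (simp add: sums_iff)
qed

lemma poisson_logloss_less:
  fixes \<theta> :: real
  assumes "\<theta> > 1"
  shows "logloss_discrete (poisson_rate_pmf \<theta>) (poisson_rate_pmf 1)
       > logloss_discrete (poisson_rate_pmf (1 / \<theta>)) (poisson_rate_pmf 1)"
proof -
  have "ln (1 / \<theta>) = - ln \<theta>" using assms by (simp add: ln_div)
  then show ?thesis
    using two_ln_less_diff_inverse[OF assms] assms by (simp add: poisson_logloss)
qed

theorem theorem2:
  fixes \<theta> :: real
  assumes "\<theta> > 1"
  shows
    \<comment> \<open>(a) scale families and log-normal log-scale family: shrinking beats inflating\<close>
    "logloss UNIV (normal_density 0 \<theta>) (normal_density 0 1)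
       < logloss UNIV (normal_density 0 (1 / \<theta>)) (normal_density 0 1)
   \<and> logloss {0<..} (exp_scale_dens \<theta>) (exp_scale_dens 1)
       < logloss {0<..} (exp_scale_dens (1 / \<theta>)) (exp_scale_dens 1)
   \<and> logloss UNIV (laplace_scale_dens \<theta>) (laplace_scale_dens 1)
       < logloss UNIV (laplace_scale_dens (1 / \<theta>)) (laplace_scale_dens 1)
   \<and> (\<forall>k > 0. logloss {0<..} (gengamma_scale_dens k k \<theta>) (gengamma_scale_dens k k 1)
       < logloss {0<..} (gengamma_scale_dens k k (1 / \<theta>)) (gengamma_scale_dens k k 1))
   \<and> (\<forall>k > 0. logloss {0<..} (gengamma_scale_dens k 1 \<theta>) (gengamma_scale_dens k 1 1)
       < logloss {0<..} (gengamma_scale_dens k 1 (1 / \<theta>)) (gengamma_scale_dens k 1 1))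
   \<and> (\<forall>k > 0. \<forall>\<gamma> > 0. logloss {0<..} (gengamma_scale_dens k \<gamma> \<theta>) (gengamma_scale_dens k \<gamma> 1)
       < logloss {0<..} (gengamma_scale_dens k \<gamma> (1 / \<theta>)) (gengamma_scale_dens k \<gamma> 1))
   \<and> (\<forall>\<mu>. logloss {0<..} (lognormal_logscale_dens \<mu> \<theta>) (lognormal_logscale_dens \<mu> 1)
       < logloss {0<..} (lognormal_logscale_dens \<mu> (1 / \<theta>)) (lognormal_logscale_dens \<mu> 1))
   \<and> \<comment> \<open>(b) inverse gamma scale family\<close>
     (\<forall>k > 0. logloss {0<..} (invgamma_scale_dens k \<theta>) (invgamma_scale_dens k 1)
       > logloss {0<..} (invgamma_scale_dens k (1 / \<theta>)) (invgamma_scale_dens k 1))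
   \<and> \<comment> \<open>(c) shape and rate families\<close>
     (\<forall>\<sigma> > 0. logloss {0<..} (gengamma_shape_dens \<sigma> 1 \<theta>) (gengamma_shape_dens \<sigma> 1 1)
       > logloss {0<..} (gengamma_shape_dens \<sigma> 1 (1 / \<theta>)) (gengamma_shape_dens \<sigma> 1 1))
   \<and> (\<forall>\<sigma> > 0. \<forall>\<gamma> > 0. logloss {0<..} (gengamma_shape_dens \<sigma> \<gamma> \<theta>) (gengamma_shape_dens \<sigma> \<gamma> 1)
       > logloss {0<..} (gengamma_shape_dens \<sigma> \<gamma> (1 / \<theta>)) (gengamma_shape_dens \<sigma> \<gamma> 1))
   \<and> (\<forall>m > 0. logloss {m..} (pareto_shape_dens m \<theta>) (pareto_shape_dens m 1)
       > logloss {m..} (pareto_shape_dens m (1 / \<theta>)) (pareto_shape_dens m 1))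
   \<and> (\<forall>\<mu> > 0. logloss {0<..} (invgauss_shape_dens \<mu> \<theta>) (invgauss_shape_dens \<mu> 1)
       > logloss {0<..} (invgauss_shape_dens \<mu> (1 / \<theta>)) (invgauss_shape_dens \<mu> 1))
   \<and> (\<forall>\<beta> > 0. logloss {0<..<1} (beta_shape_dens \<beta> \<theta>) (beta_shape_dens \<beta> 1)
       > logloss {0<..<1} (beta_shape_dens \<beta> (1 / \<theta>)) (beta_shape_dens \<beta> 1))
   \<and> logloss_discrete (poisson_rate_pmf \<theta>) (poisson_rate_pmf 1)
       > logloss_discrete (poisson_rate_pmf (1 / \<theta>)) (poisson_rate_pmf 1)"
  using normal_logloss_less[OF assms] exp_scale_logloss_less[OF assms]
    laplace_logloss_less[OF assms] gengamma_scale_logloss_less[OF _ _ assms]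
    lognormal_logloss_less[OF assms] invgamma_logloss_less[OF _ assms]
    gengamma_shape_logloss_less[OF _ _ assms] pareto_logloss_less[OF _ assms]
    invgauss_logloss_less[OF _ assms] beta_logloss_less[OF _ assms] poisson_logloss_less[OF assms]
  by auto

end
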